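(* Let $A,B,W\ge1$ be integers. Let $x_{a,b}$ for $a\in[A]$, $b\in[B]$ be strings over an alphabet $\Sigma$ (with weight function $w$), each of total weight $\sum_i w(x_{a,b}[i])\le W$, and assume that no two symbols of $\bigcirc_{a,b}x_{a,b}$ match. Let $5,\bar5,6,\bar6,7,\bar7$ be new symbols not in $\Sigma$ (with $5,\bar5$ matching, etc.) with weights $w(5)=w(\bar5)=w(7)=w(\bar7)=4AW$ and $w(6)=w(\bar6)=8AW$. Set $\rho:=(8A+12)ABW$ and $$G(\{x_{a,b}\}):=5^B(6\,\bar5)^B\circ\Big(\mathop{\bigcirc}_{a\in[A]}\Big(\mathop{\bigcirc}_{b\in[B]}\bar6\,x_{a,b}\Big)\circ6^B\Big)\circ\bar6^B(7\,6)^B\bar7^B.$$ Then for all strings $y_1,y_2$ over $\Sigma$, $$\mathrm{WRNA}\big(y_1\,G(\{x_{a,b}\})\,y_2\big)=\rho+\max_{b\in[B]}\mathrm{WRNA}\Big(y_1\circ\Big(\mathop{\bigcirc}_{a\in[A]}x_{a,b}\Big)\circ y_2\Big).$$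
   Context: Each symbol $\sigma$ has a counterpart $\bar\sigma$ with $\bar{\bar\sigma}=\sigma$; $\sigma$ and $\bar\sigma$ match. Weights satisfy $w(\sigma)=w(\bar\sigma)\in\mathbb N$. Pairs $(i,j),(i',j')$ with $i<j$, $i'<j'$ cross if they share an index or $i<i'<j<j'$ or $i'<i<j'<j$. For a string $T$ of length $N$, $\mathrm{WRNA}(T)$ is the maximum of $\sum_{(i,j)\in R}w(T[i])$ over sets $R\subseteq\{(i,j):1\le i<j\le N\}$ of pairwise non-crossing pairs such that $T[i]$ and $T[j]$ match for every $(i,j)\in R$. $\circ$ and $\bigcirc$ denote concatenation; $s^B$ is $B$-fold repetition. *)

theory Defs
  imports Main
begin

text \<open>Strings are lists, positions are 0-based. Symbols live in a type 'a with an
involution bar; sigma and tau match iff tau = bar sigma. Weights w :: 'a => nat.\<close>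

definition crossing :: "nat \<times> nat \<Rightarrow> nat \<times> nat \<Rightarrow> bool" where
  "crossing p q \<longleftrightarrow>
     (let (i, j) = p; (i', j') = q in
       i = i' \<or> i = j' \<or> j = i' \<or> j = j' \<or> (i < i' \<and> i' < j \<and> j < j') \<or> (i' < i \<and> i < j' \<and> j' < j))"

definition valid_structure :: "('a \<Rightarrow> 'a) \<Rightarrow> 'a list \<Rightarrow> (nat \<times> nat) set \<Rightarrow> bool" where
  "valid_structure bar T R \<longleftrightarrow>
     R \<subseteq> {(i, j). i < j \<and> j < length T} \<and>
     (\<forall>(i, j) \<in> R. T ! j = bar (T ! i)) \<and>
     (\<forall>p \<in> R. \<forall>q \<in> R. p \<noteq> q \<longrightarrow> \<not> crossing p q)"

definition WRNA :: "('a \<Rightarrow> 'a) \<Rightarrow> ('a \<Rightarrow> nat) \<Rightarrow> 'a list \<Rightarrow> nat" where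
  "WRNA bar w T = Max ((\<lambda>R. \<Sum>(i, j) \<in> R. w (T ! i)) ` {R. valid_structure bar T R})"

definition G :: "('a \<Rightarrow> 'a) \<Rightarrow> 'a \<Rightarrow> 'a \<Rightarrow> 'a \<Rightarrow> nat \<Rightarrow> nat \<Rightarrow> (nat \<Rightarrow> nat \<Rightarrow> 'a list) \<Rightarrow> 'a list" where
  "G bar s5 s6 s7 A B x =
     replicate B s5 @ concat (replicate B [s6, bar s5]) @
     concat (map (\<lambda>a. concat (map (\<lambda>b. bar s6 # x a b) [1..<B+1]) @ replicate B s6) [1..<A+1]) @
     replicate B (bar s6) @ concat (replicate B [s7, s6]) @ replicate B (bar s7)"

end

theory Submission
  imports Defs "HOL-Library.Sublist"
begin

text \<open>
  Lower bound: for every column b, deleting suitable gadget symbols and all cells outside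
  column b from G leaves blocks s^n (bar s)^n of total weight (8A + 12)ABW, interleaved with
  the cells of column b; by superadditivity of WRNA under insertion of blocks this gives
  WRNA(y1 G y2) >= (8A + 12)ABW + WRNA(y1 X_b y2), where X_b is the concatenation of column b.

  Upper bound: in an optimal structure, every matched 5 (resp. 7) encloses the 6 right before
  its partner (resp. right after it), which therefore stays unmatched, and the 6-pairs can use
  no more bar 6's than there are. Counting 6's and bar 6's gives
  4AW (n5 + n7 + 2 n6) <= (8A + 12)ABW. A pair of Sigma-symbols touching a cell has its other
  end in y1 or y2, so no gadget pair straddles that cell. If such pairs touch cells of
  columns c1 and c2, the two cells cut T into zones that must balance their 6's separately,
  which loses |c1 - c2| gadget pairs, i.e. 4AW |c1 - c2|. This pays for the weight, at most AW
  per column, of Sigma-pairs touching columns other than the leftmost one, while all other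
  Sigma-pairs form a structure of y1 X_b y2.
\<close>

definition struct_weight :: "('a \<Rightarrow> nat) \<Rightarrow> 'a list \<Rightarrow> (nat \<times> nat) set \<Rightarrow> nat" where
  "struct_weight w T R = (\<Sum>(i, j) \<in> R. w (T ! i))"

lemma valid_structure_finite: "valid_structure bar T R \<Longrightarrow> finite R"
  unfolding valid_structure_def
  by (rule finite_subset[of _ "{..<length T} \<times> {..<length T}"]) auto

lemma finite_valid_structures: "finite {R. valid_structure bar T R}"
  by (rule finite_subset[of _ "Pow ({..<length T} \<times> {..<length T})"])
     (auto simp: valid_structure_def)

lemma valid_structure_empty: "valid_structure bar T {}"
  by (simp add: valid_structure_def)

lemma valid_structure_subset: "valid_structure bar T R \<Longrightarrow> S \<subseteq> R \<Longrightarrow> valid_structure bar T S"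
  unfolding valid_structure_def by blast

lemma valid_structure_pairD:
  assumes "valid_structure bar T R" "(i, j) \<in> R"
  shows "i < j" "j < length T" "T ! j = bar (T ! i)"
  using assms by (auto simp: valid_structure_def)

lemma valid_structure_not_crossing:
  "valid_structure bar T R \<Longrightarrow> p \<in> R \<Longrightarrow> q \<in> R \<Longrightarrow> p \<noteq> q \<Longrightarrow> \<not> crossing p q"
  by (auto simp: valid_structure_def)

lemma not_crossing_either_way:
  assumes v: "valid_structure bar T R" and ij: "(i, j) \<in> R" and ab: "(a, b) \<in> R"
    and "(a, b) \<noteq> (i, j)"
  shows "\<not> crossing (i, j) (a, b) \<and> \<not> crossing (a, b) (i, j)"
  using valid_structure_not_crossing[OF v] ij ab assms(4) by metis

lemma valid_structure_shared_endpoint: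
  assumes "valid_structure bar T R" "p \<in> R" "q \<in> R"
    and "fst p = fst q \<or> fst p = snd q \<or> snd p = fst q \<or> snd p = snd q"
  shows "p = q"
proof (rule ccontr)
  assume "p \<noteq> q"
  then have "\<not> crossing p q" using valid_structure_not_crossing assms(1-3) by blast
  then show False using assms(4) by (cases p, cases q) (auto simp: crossing_def)
qed

lemma struct_weight_le_WRNA: "valid_structure bar T R \<Longrightarrow> struct_weight w T R \<le> WRNA bar w T"
  unfolding WRNA_def struct_weight_def
  by (rule Max_ge) (use finite_valid_structures in auto)

lemma WRNA_attained:
  obtains R where "valid_structure bar T R" "struct_weight w T R = WRNA bar w T"
proof -
  have "WRNA bar w T \<in> (\<lambda>R. \<Sum>(i, j) \<in> R. w (T ! i)) ` {R. valid_structure bar T R}"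
    unfolding WRNA_def
    by (rule Max_in) (use finite_valid_structures[of bar T] valid_structure_empty[of bar T] in auto)
  then show ?thesis using that unfolding struct_weight_def by auto
qed

lemma struct_weight_Un:
  "finite R1 \<Longrightarrow> finite R2 \<Longrightarrow> R1 \<inter> R2 = {} \<Longrightarrow>
    struct_weight w T (R1 \<union> R2) = struct_weight w T R1 + struct_weight w T R2"
  unfolding struct_weight_def by (rule sum.union_disjoint)

lemma struct_weight_const:
  "(\<And>p. p \<in> R \<Longrightarrow> w (T ! fst p) = k) \<Longrightarrow> struct_weight w T R = card R * k"
  unfolding struct_weight_def by (simp add: case_prod_beta)

lemma valid_structure_inj_on_endpoint:
  assumes "valid_structure bar T R" "\<And>p. p \<in> R \<Longrightarrow> g p = fst p \<or> g p = snd p"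
  shows "inj_on g R"
proof (rule inj_onI)
  fix p q assume "p \<in> R" "q \<in> R" "g p = g q"
  then show "p = q"
    using valid_structure_shared_endpoint[OF assms(1)] assms(2)[of p] assms(2)[of q] by metis
qed

text \<open>Each pair of R' has exactly one end carrying the symbol s, and no two pairs share an end;
  so these ends, together with the unpaired s-positions in K, are distinct s-positions of Z.\<close>

lemma card_pairs_le_count:
  assumes v: "valid_structure bar T R" and inv: "\<And>z. bar (bar z) = z"
    and R': "R' \<subseteq> R" "\<And>i j. (i, j) \<in> R' \<Longrightarrow> (T ! i = s \<or> T ! i = bar s) \<and> i \<in> Z \<and> j \<in> Z"
    and Z: "finite Z"
    and K: "K \<subseteq> Z" "\<And>k. k \<in> K \<Longrightarrow> T ! k = s \<and> (\<forall>(a, b)\<in>R. a \<noteq> k \<and> b \<noteq> k)"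
  shows "card R' + card K \<le> card {q\<in>Z. T ! q = s}"
proof -
  define g where "g p = (if T ! fst p = s then fst p else snd p)" for p
  have g: "T ! g p = s \<and> g p \<in> Z \<and> (g p = fst p \<or> g p = snd p)" if "p \<in> R'" for p
  proof -
    obtain i j where p: "p = (i, j)" by (cases p)
    have "T ! j = bar (T ! i)" using valid_structure_pairD(3)[OF v] R'(1) that p by auto
    moreover have "T ! i = s \<or> T ! i = bar s" "i \<in> Z" "j \<in> Z" using R'(2) that p by auto
    ultimately show ?thesis using p inv by (auto simp: g_def)
  qed
  have inj: "inj_on g R'"
    using valid_structure_inj_on_endpoint[OF valid_structure_subset[OF v R'(1)]] g by blast
  have "g ` R' \<inter> K = {}"
    using g K(2) R'(1) by (fastforce simp: case_prod_beta)
  moreover have "finite K" using K(1) Z by (rule finite_subset)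
  moreover have "finite (g ` R')" using Z g by (blast intro: finite_subset)
  ultimately have "card R' + card K = card (g ` R' \<union> K)"
    using inj by (simp add: card_Un_disjoint card_image)
  also have "\<dots> \<le> card {q\<in>Z. T ! q = s}" using g K Z by (intro card_mono) auto
  finally show ?thesis .
qed

lemma crossing_strict_mono:
  "strict_mono f \<Longrightarrow> crossing (f a, f b) (f c, f d) = crossing (a, b) (c, d)"
  unfolding crossing_def by (simp add: strict_mono_less strict_mono_eq)

section \<open>Embeddings and superadditivity of WRNA\<close>

definition embeds :: "(nat \<Rightarrow> nat) \<Rightarrow> 'a list \<Rightarrow> 'a list \<Rightarrow> bool" where
  "embeds f T' T \<longleftrightarrow> strict_mono f \<and> (\<forall>i<length T'. f i < length T \<and> T ! f i = T' ! i)"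

lemma valid_structure_image:
  assumes f: "embeds f T' T" and v: "valid_structure bar T' R"
  shows "valid_structure bar T (map_prod f f ` R)"
    and "struct_weight w T (map_prod f f ` R) = struct_weight w T' R"
proof -
  have sm: "strict_mono f" and emb: "\<forall>i<length T'. f i < length T \<and> T ! f i = T' ! i"
    using f by (auto simp: embeds_def)
  have sub: "R \<subseteq> {(i, j). i < j \<and> j < length T'}" using v by (simp add: valid_structure_def)
  show "valid_structure bar T (map_prod f f ` R)"
    unfolding valid_structure_def
  proof (intro conjI ballI impI)
    show "map_prod f f ` R \<subseteq> {(i, j). i < j \<and> j < length T}"
      using sub emb sm by (auto simp: strict_mono_less)
  next
    fix p assume "p \<in> map_prod f f ` R"
    then obtain a b where "(a, b) \<in> R" "p = (f a, f b)" by auto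
    then show "case p of (i, j) \<Rightarrow> T ! j = bar (T ! i)"
      using sub emb valid_structure_pairD(3)[OF v] by fastforce
  next
    fix p q assume p: "p \<in> map_prod f f ` R" and q: "q \<in> map_prod f f ` R" and "p \<noteq> q"
    obtain a b c d where "(a, b) \<in> R" "(c, d) \<in> R" "p = (f a, f b)" "q = (f c, f d)"
      using p q by auto
    then show "\<not> crossing p q"
      using valid_structure_not_crossing[OF v] crossing_strict_mono[OF sm] \<open>p \<noteq> q\<close> by auto
  qed
  have inj: "inj_on (map_prod f f) R"
    using sm by (auto simp: inj_on_def strict_mono_eq)
  have "struct_weight w T (map_prod f f ` R) = (\<Sum>(i, j) \<in> R. w (T ! f i))"
    unfolding struct_weight_def by (subst sum.reindex[OF inj]) (simp add: case_prod_beta)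
  also have "\<dots> = struct_weight w T' R"
    unfolding struct_weight_def using sub emb by (intro sum.cong) auto
  finally show "struct_weight w T (map_prod f f ` R) = struct_weight w T' R" .
qed

lemma struct_weight_le_WRNA_embedded:
  assumes f: "embeds f T' T" and v: "valid_structure bar T S"
    and cov: "\<And>i j. (i, j) \<in> S \<Longrightarrow> i \<in> f ` {..<length T'} \<and> j \<in> f ` {..<length T'}"
  shows "struct_weight w T S \<le> WRNA bar w T'"
proof -
  have sm: "strict_mono f" and emb: "\<forall>i<length T'. f i < length T \<and> T ! f i = T' ! i"
    using f by (auto simp: embeds_def)
  define S' where "S' = {(i, j). i < length T' \<and> j < length T' \<and> (f i, f j) \<in> S}"
  have img: "map_prod f f ` S' = S"
  proof
    show "S \<subseteq> map_prod f f ` S'"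
    proof
      fix p assume "p \<in> S"
      moreover obtain i j where "p = (i, j)" by (cases p)
      ultimately show "p \<in> map_prod f f ` S'" using cov by (force simp: S'_def)
    qed
  qed (auto simp: S'_def)
  have v': "valid_structure bar T' S'"
    unfolding valid_structure_def
  proof (intro conjI ballI impI)
    show "S' \<subseteq> {(i, j). i < j \<and> j < length T'}"
      using v sm by (auto simp: S'_def valid_structure_def strict_mono_less)
  next
    fix p assume "p \<in> S'"
    then show "case p of (i, j) \<Rightarrow> T' ! j = bar (T' ! i)"
      using v emb by (auto simp: S'_def valid_structure_def)
  next
    fix p q assume pq: "p \<in> S'" "q \<in> S'" "p \<noteq> q"
    obtain a b c d where ab: "p = (a, b)" "q = (c, d)" by (cases p, cases q)
    have "(f a, f b) \<noteq> (f c, f d)" using pq ab sm by (auto simp: strict_mono_eq)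
    then have "\<not> crossing (f a, f b) (f c, f d)"
      using valid_structure_not_crossing[OF v] pq ab by (auto simp: S'_def)
    then show "\<not> crossing p q" using ab crossing_strict_mono[OF sm] by simp
  qed
  then show ?thesis
    using valid_structure_image(2)[OF f v'] img struct_weight_le_WRNA[OF v'] by metis
qed

lemma embeds_subseq:
  "subseq xs ys \<Longrightarrow> \<exists>f. embeds f xs ys"
proof (induction rule: list_emb.induct)
  case (list_emb_Nil ys)
  then show ?case by (intro exI[of _ id]) (simp add: embeds_def strict_mono_def)
next
  case (list_emb_Cons xs ys y)
  then obtain f where "embeds f xs ys" by blast
  then show ?case
    by (intro exI[of _ "Suc \<circ> f"]) (auto simp: embeds_def strict_mono_def)
next
  case (list_emb_Cons2 x y xs ys)
  then obtain f where f: "embeds f xs ys" by blast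
  define g where "g i = (case i of 0 \<Rightarrow> 0 | Suc k \<Rightarrow> Suc (f k))" for i
  have "strict_mono g"
    unfolding strict_mono_Suc_iff
  proof
    fix n show "g n < g (Suc n)"
      using f by (cases n) (auto simp: g_def embeds_def strict_mono_def)
  qed
  moreover have "\<forall>i<length (x # xs). g i < length (y # ys) \<and> (y # ys) ! g i = (x # xs) ! i"
    using f list_emb_Cons2.hyps(1) by (auto simp: embeds_def g_def nth_Cons split: nat.splits)
  ultimately show ?case by (auto simp: embeds_def)
qed

lemma WRNA_mono_subseq:
  assumes "subseq u v" shows "WRNA bar w u \<le> WRNA bar w v"
proof -
  obtain f where f: "embeds f u v" using embeds_subseq[OF assms] by blast
  obtain R where R: "valid_structure bar u R" "struct_weight w u R = WRNA bar w u"
    by (rule WRNA_attained)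
  show ?thesis
    using valid_structure_image[OF f R(1)] R(2) struct_weight_le_WRNA by metis
qed

lemma embeds_append_left: "embeds f xs ys \<Longrightarrow> embeds (\<lambda>i. length s + f i) xs (s @ ys)"
  by (auto simp: embeds_def strict_mono_def nth_append)

lemma embeds_append_both:
  assumes "embeds f xs ys"
  shows "embeds (\<lambda>i. if i < length s then i else length s + f (i - length s)) (s @ xs) (s @ ys)"
proof -
  have sm: "strict_mono f" using assms by (simp add: embeds_def)
  have "strict_mono (\<lambda>i. if i < length s then i else length s + f (i - length s))"
  proof (rule strict_monoI)
    fix i j :: nat assume "i < j"
    then show "(if i < length s then i else length s + f (i - length s))
        < (if j < length s then j else length s + f (j - length s))"
      using sm strict_mono_imp_increasing[OF sm, of "j - length s"]
      by (auto simp: strict_mono_less)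
  qed
  then show ?thesis using assms by (auto simp: embeds_def nth_append)
qed

lemma WRNA_ge_block_Un:
  assumes v1: "valid_structure bar T R1" and v2: "valid_structure bar T R2"
    and out: "\<And>i j. (i, j) \<in> R1 \<Longrightarrow> (i < l \<or> r \<le> i) \<and> (j < l \<or> r \<le> j)"
    and inside: "\<And>i j. (i, j) \<in> R2 \<Longrightarrow> l \<le> i \<and> j < r"
  shows "struct_weight w T R1 + struct_weight w T R2 \<le> WRNA bar w T"
proof -
  have cross: "\<not> crossing p q \<and> \<not> crossing q p" if "p \<in> R1" "q \<in> R2" for p q
  proof -
    obtain a b c d where "p = (a, b)" "q = (c, d)" by (cases p, cases q)
    moreover have "c < d" using that valid_structure_pairD(1)[OF v2] \<open>q = (c, d)\<close> by blast
    ultimately show ?thesis using out inside that by (fastforce simp: crossing_def)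
  qed
  have "valid_structure bar T (R1 \<union> R2)"
    unfolding valid_structure_def
  proof (intro conjI ballI impI)
    fix p q assume "p \<in> R1 \<union> R2" "q \<in> R1 \<union> R2" "p \<noteq> q"
    then show "\<not> crossing p q"
      using cross valid_structure_not_crossing[OF v1] valid_structure_not_crossing[OF v2] by blast
  qed (use v1 v2 in \<open>auto simp: valid_structure_def\<close>)
  moreover have "R1 \<inter> R2 = {}"
    using out inside valid_structure_pairD(1)[OF v2] by fastforce
  ultimately show ?thesis
    using struct_weight_Un[OF valid_structure_finite[OF v1] valid_structure_finite[OF v2]]
      struct_weight_le_WRNA by metis
qed

lemma WRNA_insert: "WRNA bar w (U @ V) + WRNA bar w S \<le> WRNA bar w (U @ S @ V)"
proof -
  obtain R1 where R1: "valid_structure bar (U @ V) R1" "struct_weight w (U @ V) R1 = WRNA bar w (U @ V)"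
    by (rule WRNA_attained)
  obtain R2 where R2: "valid_structure bar S R2" "struct_weight w S R2 = WRNA bar w S"
    by (rule WRNA_attained)
  define f1 where "f1 i = (if i < length U then i else i + length S)" for i
  define f2 where "f2 i = length U + i" for i
  have e1: "embeds f1 (U @ V) (U @ S @ V)"
    by (auto simp: embeds_def strict_mono_def f1_def nth_append)
  have e2: "embeds f2 S (U @ S @ V)"
    by (auto simp: embeds_def strict_mono_def f2_def nth_append)
  note I1 = valid_structure_image[OF e1 R1(1)] and I2 = valid_structure_image[OF e2 R2(1)]
  have "struct_weight w (U @ S @ V) (map_prod f1 f1 ` R1) + struct_weight w (U @ S @ V) (map_prod f2 f2 ` R2)
      \<le> WRNA bar w (U @ S @ V)"
    by (rule WRNA_ge_block_Un[OF I1(1) I2(1), of "length U" "length U + length S"])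
       (use valid_structure_pairD[OF R2(1)] in \<open>auto simp: f1_def f2_def split: if_splits\<close>)
  then show ?thesis using I1(2) I2(2) R1(2) R2(2) by simp
qed

lemma WRNA_append: "WRNA bar w U + WRNA bar w V \<le> WRNA bar w (U @ V)"
  using WRNA_insert[of bar w U "[]" V] by simp

lemma WRNA_nest:
  assumes "w (bar \<sigma>) = w \<sigma>"
  shows "WRNA bar w U + w \<sigma> \<le> WRNA bar w (\<sigma> # U @ [bar \<sigma>])"
proof -
  obtain R where R: "valid_structure bar U R" "struct_weight w U R = WRNA bar w U"
    by (rule WRNA_attained)
  define T where "T = \<sigma> # U @ [bar \<sigma>]"
  have e: "embeds Suc U T" by (auto simp: embeds_def strict_mono_def T_def nth_append)
  have outer: "valid_structure bar T {(0, length U + 1)}"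
    by (simp add: valid_structure_def T_def nth_append)
  have "struct_weight w T {(0, length U + 1)} + struct_weight w T (map_prod Suc Suc ` R) \<le> WRNA bar w T"
    by (rule WRNA_ge_block_Un[OF outer valid_structure_image(1)[OF e R(1)], of 1 "length U + 1"])
       (use valid_structure_pairD[OF R(1)] in auto)
  then show ?thesis
    using valid_structure_image(2)[OF e R(1)] R(2) by (simp add: struct_weight_def T_def)
qed

lemma WRNA_replicate_pairs:
  assumes "w (bar \<sigma>) = w \<sigma>"
  shows "n * w \<sigma> \<le> WRNA bar w (replicate n \<sigma> @ replicate n (bar \<sigma>))"
proof (induction n)
  case (Suc n)
  have "replicate (Suc n) \<sigma> @ replicate (Suc n) (bar \<sigma>)
      = \<sigma> # (replicate n \<sigma> @ replicate n (bar \<sigma>)) @ [bar \<sigma>]"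
    by (simp add: replicate_append_same)
  then show ?case
    using Suc WRNA_nest[of w bar \<sigma> "replicate n \<sigma> @ replicate n (bar \<sigma>)", OF assms] by simp
qed simp

lemma WRNA_concat_insert:
  "WRNA bar w (u @ concat (map f as) @ v) + length as * WRNA bar w M
     \<le> WRNA bar w (u @ concat (map (\<lambda>a. f a @ M) as) @ v)"
proof (induction as arbitrary: u)
  case (Cons a as)
  have "WRNA bar w ((u @ f a @ M) @ concat (map f as) @ v) + length as * WRNA bar w M
      \<le> WRNA bar w ((u @ f a @ M) @ concat (map (\<lambda>a. f a @ M) as) @ v)" by (rule Cons.IH)
  moreover have "WRNA bar w ((u @ f a) @ concat (map f as) @ v) + WRNA bar w M
      \<le> WRNA bar w ((u @ f a) @ M @ concat (map f as) @ v)" by (rule WRNA_insert)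
  ultimately show ?case by (simp add: algebra_simps)
qed simp

lemma subseq_replicate_le: "m \<le> n \<Longrightarrow> subseq (replicate m c) (replicate n c)"
  by (metis le_add_diff_inverse prefix_imp_subseq prefixI replicate_add)

lemma subseq_replicate_concat_Cons: "subseq (replicate (length l) c) (concat (map (\<lambda>i. c # f i) l))"
  by (induction l) (auto intro: list_emb_append2)

lemma subseq_replicate_pairs_split:
  assumes "k \<le> n"
  shows "subseq (replicate (n - k) q @ replicate k p) (concat (replicate n [p, q]))"
proof -
  have fst: "subseq (replicate m p) (concat (replicate m [p, q]))" for m
    by (induction m) auto
  have snd: "subseq (replicate m q) (concat (replicate m [p, q]))" for m
    by (induction m) auto
  have "concat (replicate n [p, q]) = concat (replicate (n - k) [p, q]) @ concat (replicate k [p, q])"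
    using assms by (metis concat_append le_add_diff_inverse2 replicate_add)
  then show ?thesis using list_emb_append_mono[OF snd fst] by metis
qed

lemma subseq_concat_map:
  "(\<And>a. a \<in> set as \<Longrightarrow> subseq (f a) (g a)) \<Longrightarrow> subseq (concat (map f as)) (concat (map g as))"
  by (induction as) (auto intro: list_emb_append_mono)

lemma concat_map_rotate: "concat (map (\<lambda>a. q @ g a) as) @ q = q @ concat (map (\<lambda>a. g a @ q) as)"
  by (induction as) auto

lemma upt_split_at:
  assumes "1 \<le> b" "b \<le> B"
  shows "[1..<B+1] = [1..<b] @ b # [b+1..<B+1]"
proof -
  have "[1..<b + (B + 1 - b)] = [1..<b] @ [b..<b + (B + 1 - b)]"
    using assms by (intro upt_add_eq_append) simp
  moreover have "[b..<B + 1] = b # [b+1..<B+1]" using assms by (simp add: upt_conv_Cons)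
  ultimately show ?thesis using assms by simp
qed

lemma length_concat_replicate_pair: "length (concat (replicate n [a, b])) = 2 * n"
  by (induction n) auto

lemma nth_concat_replicate_pair:
  "k < 2 * n \<Longrightarrow> concat (replicate n [a, b]) ! k = (if even k then a else b)"
proof (induction n arbitrary: k)
  case (Suc n)
  show ?case
  proof (cases "k < 2")
    case True then show ?thesis by (cases k) (auto simp: less_2_cases_iff)
  next
    case False
    then have "concat (replicate (Suc n) [a, b]) ! k = concat (replicate n [a, b]) ! (k - 2)"
      by (simp add: nth_append numeral_2_eq_2)
    then show ?thesis using Suc False by auto
  qed
qed simp

lemma nth_concat_replicate_pair_cases:
  assumes "k < 2 * n"
  obtains m where "m < n" "k = 2 * m" "concat (replicate n [a, b]) ! k = a"
    | m where "m < n" "k = 2 * m + 1" "concat (replicate n [a, b]) ! k = b"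
  using assms nth_concat_replicate_pair[OF assms, of a b] that
  by (cases "even k") (auto elim!: evenE oddE)

lemma concat_map_snd_concat:
  "concat (map snd (concat (map f l))) = concat (map (\<lambda>i. concat (map snd (f i))) l)"
  by (induction l) auto

lemma concat_map_if_eq_single:
  "distinct l \<Longrightarrow> b \<in> set l \<Longrightarrow> concat (map (\<lambda>c. if c = b then f c else []) l) = f b"
proof (induction l)
  case (Cons c l)
  then show ?case
    by (cases "c = b") (auto intro!: concat_eq_Nil_conv[THEN iffD2])
qed simp

lemma count_list_replicate: "count_list (replicate n x) y = (if x = y then n else 0)"
  by (induction n) auto

lemma card_positions_eq_count_list:
  "m \<le> length T \<Longrightarrow> card {q. q < m \<and> T ! q = \<sigma>} = count_list (take m T) \<sigma>"
proof -
  have "count_list (take m T) \<sigma> = card {i. i < length (take m T) \<and> take m T ! i = \<sigma>}"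
    unfolding count_list_eq_length_filter length_filter_conv_card by (simp add: eq_commute)
  also assume "m \<le> length T"
  then have "{i. i < length (take m T) \<and> take m T ! i = \<sigma>} = {q. q < m \<and> T ! q = \<sigma>}"
    by auto
  finally show ?thesis by simp
qed

lemma card_less_split:
  fixes m1 m2 :: nat
  assumes "m1 \<le> m2" "\<not> P m1"
  shows "card {q. q < m2 \<and> P q} = card {q. q < m1 \<and> P q} + card {q. m1 < q \<and> q < m2 \<and> P q}"
proof -
  have "{q. q < m2 \<and> P q} = {q. q < m1 \<and> P q} \<union> {q. m1 < q \<and> q < m2 \<and> P q}"
    using assms by (auto intro: linorder_neqE_nat)
  moreover have "finite {q. q < m1 \<and> P q}" "finite {q. m1 < q \<and> q < m2 \<and> P q}" by auto
  ultimately show ?thesis by (simp add: card_Un_disjoint disjoint_iff)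
qed

lemma sum_list_map_eq_const:
  "(\<And>i. i \<in> set l \<Longrightarrow> g i = k) \<Longrightarrow> sum_list (map g l) = length l * (k::nat)"
  by (induction l) auto

lemma sum_list_map_le_const:
  "(\<And>i. i \<in> set l \<Longrightarrow> g i \<le> (K::nat)) \<Longrightarrow> sum_list (map g l) \<le> length l * K"
  by (induction l) (auto intro: add_mono)

lemma sum_list_map_concat:
  "sum_list (map w (concat xss)) = sum_list (map (\<lambda>xs. sum_list (map w xs)) xss)"
  by (induction xss) auto

lemma upper_bound_arith:
  fixes n d e s M K N :: nat
  assumes "n + d \<le> N" "s \<le> M + e * K" "e \<le> d"
  shows "4 * K * n + s \<le> 4 * K * N + M"
proof -
  have "e * K \<le> 4 * K * d" using assms(3) by (simp add: mult_le_mono)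
  moreover have "4 * K * n + 4 * K * d \<le> 4 * K * N"
    using assms(1) by (metis add_mult_distrib2 mult_le_mono2)
  ultimately show ?thesis using assms(2) by linarith
qed

fun chunk_label :: "('l \<times> 'a list) list \<Rightarrow> nat \<Rightarrow> 'l" where
  "chunk_label [] p = undefined"
| "chunk_label ((l, s) # cs) p = (if p < length s then l else chunk_label cs (p - length s))"

lemma chunk_label_mem:
  "p < length (concat (map snd cs)) \<Longrightarrow>
     \<exists>s. (chunk_label cs p, s) \<in> set cs \<and> concat (map snd cs) ! p \<in> set s"
proof (induction cs arbitrary: p)
  case (Cons c cs)
  obtain l s where c: "c = (l, s)" by (cases c)
  show ?case
  proof (cases "p < length s")
    case True then show ?thesis using c by (auto simp: nth_append)
  next
    case False
    then have "p - length s < length (concat (map snd cs))" using Cons.prems c by simp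
    from Cons.IH[OF this] False c show ?thesis by (auto simp: nth_append)
  qed
qed simp

lemma chunk_label_split:
  "p < length (concat (map snd cs)) \<Longrightarrow>
     \<exists>xs s ys k. cs = xs @ (chunk_label cs p, s) # ys \<and> k < length s \<and>
       p = length (concat (map snd xs)) + k"
proof (induction cs arbitrary: p)
  case (Cons c cs)
  obtain l s where c: "c = (l, s)" by (cases c)
  show ?case
  proof (cases "p < length s")
    case True
    then show ?thesis using c by (intro exI[of _ "[]"] exI[of _ s] exI[of _ cs] exI[of _ p]) auto
  next
    case False
    then have "p - length s < length (concat (map snd cs))" using Cons.prems c by simp
    from Cons.IH[OF this] obtain xs s' ys k where
      "cs = xs @ (chunk_label cs (p - length s), s') # ys" "k < length s'"
      "p - length s = length (concat (map snd xs)) + k" by blast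
    then show ?thesis
      using False c by (intro exI[of _ "c # xs"] exI[of _ s'] exI[of _ ys] exI[of _ k]) auto
  qed
qed simp

lemma chunk_split_unique:
  assumes "cs = xs @ (l, s) # ys" "l \<notin> fst ` set xs" "l \<notin> fst ` set ys"
    and "cs = xs' @ (l, s') # ys'"
  shows "xs = xs' \<and> s = s'"
proof -
  have "map fst xs @ l # map fst ys = map fst xs' @ l # map fst ys'"
    using assms(1,4) by (metis fst_conv list.simps(9) map_append)
  then have "map fst xs = map fst xs'"
    using assms(2,3) append_Cons_eq_iff[of l "map fst xs" "map fst ys"] by auto
  then have "xs = xs'" using assms(1,4) by (metis append_eq_append_conv length_map)
  then show ?thesis using assms(1,4) by simp
qed

lemma chunk_label_append_right:
  "p < length (concat (map snd xs)) \<Longrightarrow> chunk_label (xs @ ys) p = chunk_label xs p"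
  by (induction xs arbitrary: p) auto

lemma embeds_filter_chunks:
  "\<exists>f. embeds f (concat (map snd (filter (P \<circ> fst) cs))) (concat (map snd cs)) \<and>
     (\<forall>p<length (concat (map snd cs)). P (chunk_label cs p) \<longrightarrow>
        p \<in> f ` {..<length (concat (map snd (filter (P \<circ> fst) cs)))})"
proof (induction cs)
  case Nil
  show ?case by (intro exI[of _ id]) (simp add: embeds_def strict_mono_def)
next
  case (Cons c cs)
  obtain l s where c: "c = (l, s)" by (cases c)
  let ?F = "concat (map snd (filter (P \<circ> fst) cs))" and ?S = "concat (map snd cs)"
  from Cons.IH obtain f where f: "embeds f ?F ?S"
    and cov: "\<And>p. p < length ?S \<Longrightarrow> P (chunk_label cs p) \<Longrightarrow> p \<in> f ` {..<length ?F}" by blast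
  have tail: "\<exists>i<length ?F. p = length s + f i"
    if "p < length (s @ ?S)" "P (chunk_label (c # cs) p)" "\<not> p < length s" for p
  proof -
    have "p - length s < length ?S" "P (chunk_label cs (p - length s))" using that c by auto
    from cov[OF this] obtain i where "i < length ?F" "p - length s = f i" by blast
    then show ?thesis using that(3) by (intro exI[of _ i]) auto
  qed
  show ?case
  proof (cases "P l")
    case True
    let ?g = "\<lambda>i. if i < length s then i else length s + f (i - length s)"
    have hit: "p \<in> ?g ` {..<length (s @ ?F)}"
      if "p < length (s @ ?S)" "P (chunk_label (c # cs) p)" for p
    proof (cases "p < length s")
      case True
      then show ?thesis by (intro image_eqI[of _ _ p]) auto
    next
      case False
      with tail[OF that] obtain i where "i < length ?F" "p = length s + f i" by blast
      then show ?thesis by (intro image_eqI[of _ _ "length s + i"]) auto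
    qed
    show ?thesis
    proof (intro exI[of _ ?g] conjI allI impI)
      show "embeds ?g (concat (map snd (filter (P \<circ> fst) (c # cs)))) (concat (map snd (c # cs)))"
        using embeds_append_both[OF f, of s] c True by simp
      fix p assume "p < length (concat (map snd (c # cs)))" "P (chunk_label (c # cs) p)"
      then show "p \<in> ?g ` {..<length (concat (map snd (filter (P \<circ> fst) (c # cs))))}"
        using hit c True by simp
    qed
  next
    case False
    have hit: "p \<in> (\<lambda>i. length s + f i) ` {..<length ?F}"
      if "p < length (s @ ?S)" "P (chunk_label (c # cs) p)" for p
    proof -
      have "\<not> p < length s" using that(2) c False by auto
      with tail[OF that] show ?thesis by blast
    qed
    show ?thesis
    proof (intro exI[of _ "\<lambda>i. length s + f i"] conjI allI impI)
      show "embeds (\<lambda>i. length s + f i) (concat (map snd (filter (P \<circ> fst) (c # cs))))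
          (concat (map snd (c # cs)))"
        using embeds_append_left[OF f, of s] c False by simp
      fix p assume "p < length (concat (map snd (c # cs)))" "P (chunk_label (c # cs) p)"
      then show "p \<in> (\<lambda>i. length s + f i) ` {..<length (concat (map snd (filter (P \<circ> fst) (c # cs))))}"
        using hit c False by simp
    qed
  qed
qed

section \<open>The gadget\<close>

datatype chunk_kind = Outer | Gadget | Cell nat nat

definition is_cell :: "chunk_kind \<Rightarrow> bool" where
  "is_cell l \<longleftrightarrow> (case l of Cell a c \<Rightarrow> True | _ \<Rightarrow> False)"

declare upt_Suc[simp del]

locale WRNA_gadget =
  fixes bar :: "'a \<Rightarrow> 'a" and w :: "'a \<Rightarrow> nat" and \<Sigma> :: "'a set"
    and A B W :: nat and x :: "nat \<Rightarrow> nat \<Rightarrow> 'a list" and s5 s6 s7 :: 'a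
    and y1 y2 :: "'a list"
  assumes bar_inv: "\<And>\<sigma>. bar (bar \<sigma>) = \<sigma>"
    and w_bar: "\<And>\<sigma>. w (bar \<sigma>) = w \<sigma>"
    and Sigma_closed: "\<And>\<sigma>. \<sigma> \<in> \<Sigma> \<Longrightarrow> bar \<sigma> \<in> \<Sigma>"
    and A: "A \<ge> 1" and B: "B \<ge> 1" and W: "W \<ge> 1"
    and x_Sigma: "\<And>a b. a \<in> {1..A} \<Longrightarrow> b \<in> {1..B} \<Longrightarrow> set (x a b) \<subseteq> \<Sigma>"
    and x_weight: "\<And>a b. a \<in> {1..A} \<Longrightarrow> b \<in> {1..B} \<Longrightarrow> sum_list (map w (x a b)) \<le> W"
    and no_match: "let X = concat (map (\<lambda>a. concat (map (\<lambda>b. x a b) [1..<B+1])) [1..<A+1])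
                   in \<forall>i j. i < j \<and> j < length X \<longrightarrow> X ! j \<noteq> bar (X ! i)"
    and new_distinct: "distinct [s5, bar s5, s6, bar s6, s7, bar s7]"
    and new_fresh: "s5 \<notin> \<Sigma>" "bar s5 \<notin> \<Sigma>" "s6 \<notin> \<Sigma>" "bar s6 \<notin> \<Sigma>"
                   "s7 \<notin> \<Sigma>" "bar s7 \<notin> \<Sigma>"
    and w5: "w s5 = 4 * A * W" and w6: "w s6 = 8 * A * W" and w7: "w s7 = 4 * A * W"
    and y1_Sigma: "set y1 \<subseteq> \<Sigma>" and y2_Sigma: "set y2 \<subseteq> \<Sigma>"
begin

abbreviation "Gx \<equiv> G bar s5 s6 s7 A B x"
abbreviation "T \<equiv> y1 @ Gx @ y2"
abbreviation "column b \<equiv> concat (map (\<lambda>a. x a b) [1..<A+1])"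

section \<open>Lower bound\<close>

lemma WRNA_replicate_bar:
  "n * w \<sigma> \<le> WRNA bar w (replicate n \<sigma> @ replicate n (bar \<sigma>))"
  by (rule WRNA_replicate_pairs) (rule w_bar)

text \<open>For a column b, G contains a subsequence in which, apart from the cells x a b, every
  gadget symbol sits in a block of the form s^n (bar s)^n; these blocks pair up completely and
  carry the weight (8A + 12)ABW.\<close>

lemma subseq_G_column:
  assumes b: "1 \<le> b" "b \<le> B"
  defines "p \<equiv> replicate b s6" and "q \<equiv> replicate b (bar s6)"
    and "N \<equiv> replicate (B - b) (bar s6) @ replicate (B - b) s6"
  shows "subseq (replicate (B - b) s5 @ replicate (B - b) (bar s5) @ p @ q
            @ concat (map (\<lambda>a. x a b @ N @ p @ q) [1..<A+1])
            @ N @ replicate b s7 @ replicate b (bar s7)) Gx"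
proof -
  let ?as = "[1..<A+1]"
  have row: "subseq (q @ x a b @ N @ p)
       (concat (map (\<lambda>c. bar s6 # x a c) [1..<B+1]) @ replicate B s6)" for a
  proof -
    have split: "concat (map (\<lambda>c. bar s6 # x a c) [1..<B+1])
        = concat (map (\<lambda>c. bar s6 # x a c) [1..<b]) @ (bar s6 # x a b)
          @ concat (map (\<lambda>c. bar s6 # x a c) [b+1..<B+1])"
      unfolding upt_split_at[OF b] by simp
    have len: "length [b+1..<B+1] = B - b" by simp
    have "subseq (replicate (b - 1) (bar s6) @ (bar s6 # x a b) @ replicate (B - b) (bar s6))
        (concat (map (\<lambda>c. bar s6 # x a c) [1..<B+1]))"
      unfolding split
      by (intro list_emb_append_mono subseq_order.refl
          subseq_replicate_concat_Cons[of "[1..<b]", unfolded length_upt]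
          subseq_replicate_concat_Cons[of "[b+1..<B+1]", unfolded len])
    moreover have "replicate (b - 1) (bar s6) @ (bar s6 # x a b) @ replicate (B - b) (bar s6)
        = q @ x a b @ replicate (B - b) (bar s6)"
      using b(1) unfolding q_def by (cases b) (simp_all add: replicate_app_Cons_same)
    moreover have "replicate B s6 = replicate (B - b) s6 @ p"
      using b(2) unfolding p_def replicate_add[symmetric] by simp
    ultimately show ?thesis unfolding N_def
      using list_emb_append_mono[OF _ subseq_order.refl[of "replicate (B - b) s6 @ p"]]
      by (metis append.assoc)
  qed
  have "subseq (replicate (B - b) s5 @ (replicate (B - b) (bar s5) @ p)
      @ concat (map (\<lambda>a. q @ x a b @ N @ p) ?as) @ (q @ replicate (B - b) (bar s6))
      @ (replicate (B - b) s6 @ replicate b s7) @ replicate b (bar s7)) Gx"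
    unfolding G_def
  proof (intro list_emb_append_mono)
    show "subseq (replicate (B - b) s5) (replicate B s5)" by (rule subseq_replicate_le) simp
    show "subseq (replicate (B - b) (bar s5) @ p) (concat (replicate B [s6, bar s5]))"
      unfolding p_def by (rule subseq_replicate_pairs_split[OF b(2)])
    show "subseq (concat (map (\<lambda>a. q @ x a b @ N @ p) ?as))
        (concat (map (\<lambda>a. concat (map (\<lambda>b. bar s6 # x a b) [1..<B + 1]) @ replicate B s6) ?as))"
      by (rule subseq_concat_map) (rule row)
    show "subseq (q @ replicate (B - b) (bar s6)) (replicate B (bar s6))"
      unfolding q_def using b(2) by (metis le_add_diff_inverse replicate_add subseq_order.refl)
    show "subseq (replicate (B - b) s6 @ replicate b s7) (concat (replicate B [s7, s6]))"
      by (rule subseq_replicate_pairs_split[OF b(2)])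
    show "subseq (replicate b (bar s7)) (replicate B (bar s7))"
      by (rule subseq_replicate_le[OF b(2)])
  qed
  moreover have "replicate (B - b) s5 @ (replicate (B - b) (bar s5) @ p)
      @ concat (map (\<lambda>a. q @ x a b @ N @ p) ?as) @ (q @ replicate (B - b) (bar s6))
      @ (replicate (B - b) s6 @ replicate b s7) @ replicate b (bar s7)
    = replicate (B - b) s5 @ replicate (B - b) (bar s5) @ p
      @ (concat (map (\<lambda>a. q @ (x a b @ N @ p)) ?as) @ q)
      @ N @ replicate b s7 @ replicate b (bar s7)"
    by (simp add: N_def)
  ultimately show ?thesis by (simp only: concat_map_rotate append_assoc)
qed

lemma lower_bound:
  assumes b: "1 \<le> b" "b \<le> B"
  shows "(8 * A + 12) * A * B * W + WRNA bar w (y1 @ column b @ y2) \<le> WRNA bar w T"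
proof -
  define p where "p = replicate b s6"
  define q where "q = replicate b (bar s6)"
  define N where "N = replicate (B - b) (bar s6) @ replicate (B - b) s6"
  define K where "K = replicate (B - b) s5 @ replicate (B - b) (bar s5) @ p @ q"
  define M where "M = N @ p @ q"
  define E where "E = N @ replicate b s7 @ replicate b (bar s7)"
  define C where "C = concat (map (\<lambda>a. x a b @ M) [1..<A+1])"
  have "subseq (K @ C @ E) Gx"
    using subseq_G_column[OF b] by (simp add: K_def C_def E_def M_def p_def q_def N_def)
  then have "subseq (y1 @ (K @ C @ E) @ y2) T"
    by (intro list_emb_append_mono subseq_order.refl)
  then have "WRNA bar w (y1 @ K @ C @ E @ y2) \<le> WRNA bar w T"
    using WRNA_mono_subseq by fastforce
  moreover have "WRNA bar w (y1 @ C @ E @ y2) + WRNA bar w K \<le> WRNA bar w (y1 @ K @ C @ E @ y2)"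
    using WRNA_insert[of bar w y1 "C @ E @ y2" K] by simp
  moreover have "WRNA bar w (y1 @ C @ y2) + WRNA bar w E \<le> WRNA bar w (y1 @ C @ E @ y2)"
    using WRNA_insert[of bar w "y1 @ C" y2 E] by simp
  moreover have "WRNA bar w (y1 @ column b @ y2) + A * WRNA bar w M \<le> WRNA bar w (y1 @ C @ y2)"
    using WRNA_concat_insert[of bar w y1 "\<lambda>a. x a b" "[1..<A+1]" y2 M] by (simp add: C_def)
  moreover have "(B - b) * w s5 + b * w s6 \<le> WRNA bar w K"
    using WRNA_append[of bar w "replicate (B - b) s5 @ replicate (B - b) (bar s5)" "p @ q"]
      WRNA_replicate_bar[of "B - b" s5] WRNA_replicate_bar[of b s6]
    by (simp add: K_def p_def q_def)
  moreover have "A * ((B - b) * w s6 + b * w s6) \<le> A * WRNA bar w M"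
    using WRNA_append[of bar w N "p @ q"] WRNA_replicate_bar[of b s6]
      WRNA_replicate_bar[of "B - b" "bar s6"]
    by (intro mult_le_mono2) (simp add: M_def N_def p_def q_def bar_inv w_bar)
  moreover have "(B - b) * w s6 + b * w s7 \<le> WRNA bar w E"
    using WRNA_append[of bar w N "replicate b s7 @ replicate b (bar s7)"]
      WRNA_replicate_bar[of b s7] WRNA_replicate_bar[of "B - b" "bar s6"]
    by (simp add: E_def N_def bar_inv w_bar)
  moreover obtain d where "B = b + d" using b(2) le_Suc_ex by blast
  then have "(8 * A + 12) * A * B * W
      = ((B - b) * w s5 + b * w s6) + A * ((B - b) * w s6 + b * w s6) + ((B - b) * w s6 + b * w s7)"
    by (simp add: w5 w6 w7 algebra_simps)
  ultimately show ?thesis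
    by linarith
qed

definition "head = replicate B s5 @ concat (replicate B [s6, bar s5])"
definition "row a = concat (map (\<lambda>c. bar s6 # x a c) [1..<B+1]) @ replicate B s6"
definition "body = concat (map row [1..<A+1])"
definition "tail = replicate B (bar s6) @ concat (replicate B [s7, s6]) @ replicate B (bar s7)"
definition "gadget_syms = {s5, bar s5, s6, bar s6, s7, bar s7}"

text \<open>To trace positions of T back to the construction, T is cut into chunks labelled as outer
  strings, cells x a c, or gadget pieces.\<close>

definition "cell_chunks a c = [(Gadget, [bar s6]), (Cell a c, x a c)]"
definition "row_chunks a = concat (map (cell_chunks a) [1..<B+1]) @ [(Gadget, replicate B s6)]"
definition "chunks =
  [(Outer, y1), (Gadget, head)] @ concat (map row_chunks [1..<A+1]) @ [(Gadget, tail), (Outer, y2)]"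
definition "chunks_before a c = [(Outer, y1), (Gadget, head)] @ concat (map row_chunks [1..<a])
  @ concat (map (cell_chunks a) [1..<c]) @ [(Gadget, [bar s6])]"
definition "chunks_after a c = concat (map (cell_chunks a) [c+1..<B+1]) @ [(Gadget, replicate B s6)]
  @ concat (map row_chunks [a+1..<A+1]) @ [(Gadget, tail), (Outer, y2)]"

abbreviation "kind p \<equiv> chunk_label chunks p"
abbreviation "head_start \<equiv> length y1"
abbreviation "tail_start \<equiv> length y1 + 3 * B + length body"

lemma syms_distinct:
  "s5 \<noteq> bar s5" "s5 \<noteq> s6" "s5 \<noteq> bar s6" "s5 \<noteq> s7" "s5 \<noteq> bar s7"
  "bar s5 \<noteq> s6" "bar s5 \<noteq> bar s6" "bar s5 \<noteq> s7" "bar s5 \<noteq> bar s7"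
  "s6 \<noteq> bar s6" "s6 \<noteq> s7" "s6 \<noteq> bar s7" "bar s6 \<noteq> s7" "bar s6 \<noteq> bar s7" "s7 \<noteq> bar s7"
  using new_distinct by auto

lemma gadget_syms_not_Sigma: "z \<in> gadget_syms \<Longrightarrow> z \<notin> \<Sigma>"
  using new_fresh by (auto simp: gadget_syms_def)

lemma bar_gadget_syms: "z \<in> gadget_syms \<Longrightarrow> bar z \<in> gadget_syms"
  by (auto simp: gadget_syms_def bar_inv)

lemma bar_eq_iff: "bar a = b \<longleftrightarrow> a = bar b"
  using bar_inv by metis

lemma T_eq: "T = y1 @ head @ body @ tail @ y2"
  unfolding G_def head_def tail_def body_def row_def by (simp only: append_assoc)

lemma length_head: "length head = 3 * B"
  by (simp add: head_def length_concat_replicate_pair)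

lemma length_tail: "length tail = 4 * B"
  by (simp add: tail_def length_concat_replicate_pair)

lemma length_T: "length T = tail_start + 4 * B + length y2"
  by (simp add: T_eq length_head length_tail)

lemma concat_row_chunks: "concat (map snd (row_chunks a)) = row a"
  unfolding row_chunks_def row_def cell_chunks_def by (simp add: concat_map_snd_concat)

lemma concat_chunks: "concat (map snd chunks) = T"
  unfolding chunks_def T_eq body_def by (simp add: concat_map_snd_concat concat_row_chunks)

lemma concat_chunks_before: "concat (map snd (chunks_before a c)) =
   y1 @ head @ concat (map row [1..<a]) @ concat (map (\<lambda>c'. bar s6 # x a c') [1..<c]) @ [bar s6]"
  unfolding chunks_before_def cell_chunks_def by (simp add: concat_map_snd_concat concat_row_chunks)

lemma chunks_split:
  assumes "a \<in> {1..A}" "c \<in> {1..B}"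
  shows "chunks = chunks_before a c @ (Cell a c, x a c) # chunks_after a c"
proof -
  have "row_chunks a = concat (map (cell_chunks a) [1..<c]) @ [(Gadget, [bar s6]), (Cell a c, x a c)]
      @ concat (map (cell_chunks a) [c+1..<B+1]) @ [(Gadget, replicate B s6)]"
    unfolding row_chunks_def using assms upt_split_at[of c B] by (simp add: cell_chunks_def)
  then show ?thesis
    unfolding chunks_def chunks_before_def chunks_after_def using assms upt_split_at[of a A] by simp
qed

lemma row_chunks_memD:
  "(l, s) \<in> set (row_chunks a) \<Longrightarrow>
   (l = Gadget \<and> (s = [bar s6] \<or> s = replicate B s6)) \<or> (\<exists>c \<in> set [1..<B+1]. l = Cell a c \<and> s = x a c)"
proof -
  assume "(l, s) \<in> set (row_chunks a)"
  then consider "(l, s) = (Gadget, replicate B s6)"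
    | c where "c \<in> set [1..<B+1]" "(l, s) \<in> set (cell_chunks a c)"
    unfolding row_chunks_def by auto
  then show ?thesis by cases (auto simp: cell_chunks_def)
qed

lemma Cell_in_row_chunks: "(Cell a' c, s) \<in> set (row_chunks a) \<Longrightarrow> a' = a"
  using row_chunks_memD by blast

lemma Cell_label_unique:
  "Cell a c \<notin> fst ` set (chunks_before a c)" "Cell a c \<notin> fst ` set (chunks_after a c)"
  by (auto simp: chunks_before_def chunks_after_def cell_chunks_def dest!: Cell_in_row_chunks)

lemma chunks_memD:
  assumes "(l, s) \<in> set chunks"
  shows "(l = Gadget \<longrightarrow> set s \<subseteq> gadget_syms) \<and> (l = Outer \<longrightarrow> set s \<subseteq> \<Sigma>) \<and>
         (\<forall>a c. l = Cell a c \<longrightarrow> a \<in> {1..A} \<and> c \<in> {1..B} \<and> s = x a c \<and> set s \<subseteq> \<Sigma>)"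
proof -
  consider "(l, s) = (Outer, y1)" | "(l, s) = (Gadget, head)" | "(l, s) = (Gadget, tail)"
    | "(l, s) = (Outer, y2)" | a where "a \<in> set [1..<A+1]" "(l, s) \<in> set (row_chunks a)"
    using assms unfolding chunks_def by auto
  then show ?thesis
  proof cases
    case 5
    from row_chunks_memD[OF 5(2)] show ?thesis
    proof
      assume "\<exists>c \<in> set [1..<B+1]. l = Cell a c \<and> s = x a c"
      then obtain c where "c \<in> set [1..<B+1]" "l = Cell a c" "s = x a c" by blast
      then show ?thesis using 5(1) x_Sigma[of a c] by auto
    qed (auto simp: gadget_syms_def)
  qed (use y1_Sigma y2_Sigma in \<open>auto simp: gadget_syms_def head_def tail_def\<close>)
qed

lemma kind_symbol:
  assumes "p < length T"
  shows "(kind p = Gadget \<longrightarrow> T ! p \<in> gadget_syms) \<and> (kind p \<noteq> Gadget \<longrightarrow> T ! p \<in> \<Sigma>)"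
proof -
  from chunk_label_mem[of p chunks] assms obtain s where
    "(kind p, s) \<in> set chunks" "T ! p \<in> set s"
    using concat_chunks by auto
  then show ?thesis using chunks_memD[of "kind p" s] by (cases "kind p") auto
qed

lemma symbol_cases: "p < length T \<Longrightarrow> T ! p \<in> \<Sigma> \<or> T ! p \<in> gadget_syms"
  using kind_symbol by blast

lemma Cell_position:
  assumes p: "p < length T" and l: "kind p = Cell a c"
  shows "a \<in> {1..A}" "c \<in> {1..B}"
    and "\<exists>k < length (x a c). p = length (concat (map snd (chunks_before a c))) + k"
    and "head_start + 3 * B \<le> p" "p < tail_start"
proof -
  have pl: "p < length (concat (map snd chunks))" using p concat_chunks by simp
  from chunk_label_mem[OF pl] obtain s where "(kind p, s) \<in> set chunks" by blast
  then show ac: "a \<in> {1..A}" "c \<in> {1..B}" using chunks_memD l by auto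
  from chunk_label_split[OF pl] obtain xs s ys k where h: "chunks = xs @ (kind p, s) # ys"
    "k < length s" "p = length (concat (map snd xs)) + k" by blast
  have "chunks_before a c = xs \<and> x a c = s"
    using chunk_split_unique[OF chunks_split[OF ac] Cell_label_unique] h(1) l by metis
  then show pos: "\<exists>k < length (x a c). p = length (concat (map snd (chunks_before a c))) + k"
    using h by auto
  have "length (concat (map snd (chunks_before a c))) \<ge> head_start + 3 * B"
    unfolding concat_chunks_before by (simp add: length_head)
  then show "head_start + 3 * B \<le> p" using pos by auto
  have "length T = length (concat (map snd (chunks_before a c))) + length (x a c)
      + length (concat (map snd (chunks_after a c)))"
    using arg_cong[OF chunks_split[OF ac], of "\<lambda>cs. length (concat (map snd cs))"] concat_chunks
    by simp
  moreover have "length (concat (map snd (chunks_after a c))) \<ge> 4 * B + length y2"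
    unfolding chunks_after_def by (simp add: length_tail)
  ultimately show "p < tail_start" using pos length_T by auto
qed

lemma Outer_position:
  assumes p: "p < length T" and l: "kind p = Outer"
  shows "p < head_start \<or> tail_start + 4 * B \<le> p"
proof (rule ccontr)
  assume "\<not> ?thesis"
  then have pr: "head_start \<le> p" "p < head_start + length Gx"
    using length_T T_eq by (auto simp: length_head length_tail)
  define inner where "inner = (Gadget, head) # concat (map row_chunks [1..<A+1]) @ [(Gadget, tail)]"
  have split: "chunks = (Outer, y1) # inner @ [(Outer, y2)]" by (simp add: chunks_def inner_def)
  have "concat (map snd inner) = Gx"
    unfolding inner_def T_eq body_def by (simp add: concat_map_snd_concat concat_row_chunks
        G_def head_def tail_def row_def)
  then have "kind p = chunk_label inner (p - head_start)"
    using pr split chunk_label_append_right[of "p - head_start" inner] by simp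
  moreover have "p - head_start < length (concat (map snd inner))"
    using pr \<open>concat (map snd inner) = Gx\<close> by simp
  ultimately obtain s where "(Outer, s) \<in> set inner" using chunk_label_mem l by metis
  then show False unfolding inner_def using row_chunks_memD by fastforce
qed

lemma head_nth_cases:
  assumes "k < 3 * B"
  obtains "k < B" "head ! k = s5"
    | m where "m < B" "k = B + 2 * m" "head ! k = s6"
    | m where "m < B" "k = B + 2 * m + 1" "head ! k = bar s5"
proof (cases "k < B")
  case True
  then have "head ! k = s5" by (simp add: head_def nth_append)
  with True show ?thesis by (rule that(1))
next
  case False
  then have hk: "head ! k = concat (replicate B [s6, bar s5]) ! (k - B)"
    by (simp add: head_def nth_append)
  from assms have "k - B < 2 * B" by simp
  then show ?thesis
  proof (cases rule: nth_concat_replicate_pair_cases[of _ _ s6 "bar s5"])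
    case (1 m)
    moreover from 1 False have "k = B + 2 * m" by simp
    ultimately show ?thesis using hk by (intro that(2)[of m]) simp_all
  next
    case (2 m)
    moreover from 2 False have "k = B + 2 * m + 1" by simp
    ultimately show ?thesis using hk by (intro that(3)[of m]) simp_all
  qed
qed

lemma tail_nth_cases:
  assumes "k < 4 * B"
  obtains "k < B" "tail ! k = bar s6"
    | m where "m < B" "k = B + 2 * m" "tail ! k = s7"
    | m where "m < B" "k = B + 2 * m + 1" "tail ! k = s6"
    | "3 * B \<le> k" "tail ! k = bar s7"
proof -
  have tail: "tail = replicate B (bar s6) @ concat (replicate B [s7, s6]) @ replicate B (bar s7)"
    by (rule tail_def)
  consider "k < B" | "B \<le> k" "k < 3 * B" | "3 * B \<le> k" by linarith
  then show ?thesis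
  proof cases
    case 1 then show ?thesis using that(1) by (auto simp: tail nth_append)
  next
    case mid: 2
    then have tk: "tail ! k = concat (replicate B [s7, s6]) ! (k - B)"
      by (auto simp: tail nth_append length_concat_replicate_pair)
    from mid have "k - B < 2 * B" by simp
    then show ?thesis
    proof (cases rule: nth_concat_replicate_pair_cases[of _ _ s7 s6])
      case (1 m)
      moreover from 1 mid have "k = B + 2 * m" by simp
      ultimately show ?thesis using tk by (intro that(2)[of m]) simp_all
    next
      case (2 m)
      moreover from 2 mid have "k = B + 2 * m + 1" by simp
      ultimately show ?thesis using tk by (intro that(3)[of m]) simp_all
    qed
  next
    case 3
    moreover have "tail ! k = bar s7"
      using 3 assms by (auto simp: tail nth_append length_concat_replicate_pair)
    ultimately show ?thesis by (rule that(4))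
  qed
qed

lemma T_nth_head:
  "head_start \<le> p \<Longrightarrow> p < head_start + 3 * B \<Longrightarrow> T ! p = head ! (p - head_start)"
  unfolding T_eq by (auto simp: nth_append length_head)

lemma T_nth_tail:
  "tail_start \<le> p \<Longrightarrow> p < tail_start + 4 * B \<Longrightarrow> T ! p = tail ! (p - tail_start)"
  unfolding T_eq by (auto simp: nth_append length_head length_tail)

lemma T_nth_body:
  assumes "head_start + 3 * B \<le> p" "p < tail_start"
  shows "T ! p \<in> \<Sigma> \<union> {s6, bar s6}"
proof -
  have "T ! p = body ! (p - (head_start + 3 * B))"
    unfolding T_eq using assms by (auto simp: nth_append length_head)
  moreover have "set body \<subseteq> \<Sigma> \<union> {s6, bar s6}"
  proof
    fix z assume "z \<in> set body"
    then obtain a c where "a \<in> set [1..<A+1]" "c \<in> set [1..<B+1]" "z = bar s6 \<or> z \<in> set (x a c) \<or> z = s6"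
      unfolding body_def row_def by (auto split: if_splits)
    then show "z \<in> \<Sigma> \<union> {s6, bar s6}" using x_Sigma[of a c] by auto
  qed
  moreover have "p - (head_start + 3 * B) < length body" using assms by simp
  ultimately show ?thesis using nth_mem by (metis subsetD)
qed

lemma T_nth_outer:
  assumes "p < head_start \<or> tail_start + 4 * B \<le> p" "p < length T"
  shows "T ! p \<in> \<Sigma>"
  using assms(1)
proof
  assume "p < head_start"
  then show ?thesis using y1_Sigma by (simp add: nth_append subset_iff)
next
  assume p: "tail_start + 4 * B \<le> p"
  have "T = (y1 @ head @ body @ tail) @ y2" by (simp add: T_eq)
  moreover have "length (y1 @ head @ body @ tail) = tail_start + 4 * B"
    by (simp add: length_head length_tail)
  ultimately have "T ! p = y2 ! (p - (tail_start + 4 * B))"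
    using p by (metis le_add_diff_inverse nth_append_length_plus)
  moreover have "p - (tail_start + 4 * B) < length y2" using p assms(2) length_T by simp
  ultimately show ?thesis using y2_Sigma nth_mem by fastforce
qed

lemma T_nth_cases:
  assumes p: "p < length T"
  obtains "p < head_start" "T ! p \<in> \<Sigma>"
    | "head_start \<le> p" "p < head_start + B" "T ! p = s5"
    | m where "m < B" "p = head_start + B + 2 * m" "T ! p = s6"
    | m where "m < B" "p = head_start + B + 2 * m + 1" "T ! p = bar s5"
    | "head_start + 3 * B \<le> p" "p < tail_start" "T ! p \<in> \<Sigma> \<union> {s6, bar s6}"
    | "tail_start \<le> p" "p < tail_start + B" "T ! p = bar s6"
    | m where "m < B" "p = tail_start + B + 2 * m" "T ! p = s7"
    | m where "m < B" "p = tail_start + B + 2 * m + 1" "T ! p = s6"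
    | "tail_start + 3 * B \<le> p" "p < tail_start + 4 * B" "T ! p = bar s7"
    | "tail_start + 4 * B \<le> p" "T ! p \<in> \<Sigma>"
proof -
  consider "p < head_start" | "head_start \<le> p" "p < head_start + 3 * B"
    | "head_start + 3 * B \<le> p" "p < tail_start" | "tail_start \<le> p" "p < tail_start + 4 * B"
    | "tail_start + 4 * B \<le> p" by linarith
  then show ?thesis
  proof cases
    case 1 then show ?thesis using that(1) T_nth_outer p by simp
  next
    case 2
    then have k: "p - head_start < 3 * B" and Tp: "T ! p = head ! (p - head_start)"
      by (simp_all add: T_nth_head)
    from k show ?thesis
    proof (cases rule: head_nth_cases)
      case 1 with 2 Tp show ?thesis by (intro that(2)) auto
    next
      case (2 m) with 2 Tp show ?thesis by (intro that(3)[of m]) auto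
    next
      case (3 m) with 2 Tp show ?thesis by (intro that(4)[of m]) auto
    qed
  next
    case 3 then show ?thesis using that(5) T_nth_body by simp
  next
    case 4
    then have k: "p - tail_start < 4 * B" and Tp: "T ! p = tail ! (p - tail_start)"
      by (simp_all add: T_nth_tail)
    from k show ?thesis
    proof (cases rule: tail_nth_cases)
      case 1 with 4 Tp show ?thesis by (intro that(6)) auto
    next
      case (2 m) with 4 Tp show ?thesis by (intro that(7)[of m]) auto
    next
      case (3 m) with 4 Tp show ?thesis by (intro that(8)[of m]) auto
    next
      case 4 with \<open>tail_start \<le> p\<close> \<open>p < tail_start + 4 * B\<close> Tp show ?thesis
        by (intro that(9)) auto
    qed
  next
    case 5 then show ?thesis using that(10) T_nth_outer p by simp
  qed
qed

lemma s5_position: "p < length T \<Longrightarrow> T ! p = s5 \<Longrightarrow> head_start \<le> p \<and> p < head_start + B"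
  by (cases rule: T_nth_cases) (use syms_distinct new_fresh in auto)

lemma bar_s5_position:
  "p < length T \<Longrightarrow> T ! p = bar s5 \<Longrightarrow> \<exists>m<B. p = head_start + B + 2 * m + 1"
  by (cases rule: T_nth_cases) (use syms_distinct new_fresh in auto)

lemma s7_position: "p < length T \<Longrightarrow> T ! p = s7 \<Longrightarrow> \<exists>m<B. p = tail_start + B + 2 * m"
  by (cases rule: T_nth_cases) (use syms_distinct new_fresh in auto)

lemma bar_s7_position:
  "p < length T \<Longrightarrow> T ! p = bar s7 \<Longrightarrow> tail_start + 3 * B \<le> p \<and> p < tail_start + 4 * B"
  by (cases rule: T_nth_cases) (use syms_distinct new_fresh in auto)

lemma bar_s6_position:
  "p < length T \<Longrightarrow> T ! p = bar s6 \<Longrightarrow>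
    \<not> (head_start \<le> p \<and> p < head_start + 3 * B) \<and> \<not> (tail_start + B \<le> p \<and> p < tail_start + 4 * B)"
  by (cases rule: T_nth_cases) (use syms_distinct new_fresh in auto)

lemma gadget_position:
  "p < length T \<Longrightarrow> T ! p \<in> gadget_syms \<Longrightarrow> head_start \<le> p \<and> p < tail_start + 4 * B"
  by (cases rule: T_nth_cases) (use gadget_syms_not_Sigma in auto)

lemma T_nth_head_s6:
  assumes "m < B" shows "T ! (head_start + B + 2 * m) = s6"
proof -
  have "T ! (head_start + B + 2 * m) = head ! (B + 2 * m)" using assms by (simp add: T_nth_head)
  also have "\<dots> = s6" using assms by (simp add: head_def nth_append nth_concat_replicate_pair)
  finally show ?thesis .
qed

lemma T_nth_tail_s6:
  assumes "m < B" shows "T ! (tail_start + B + 2 * m + 1) = s6"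
proof -
  have "T ! (tail_start + B + 2 * m + 1) = tail ! (B + 2 * m + 1)" using assms by (simp add: T_nth_tail)
  also have "\<dots> = s6"
    using assms by (simp add: tail_def nth_append nth_concat_replicate_pair length_concat_replicate_pair)
  finally show ?thesis .
qed

lemma count_cells:
  assumes a: "a \<in> {1..A}" and l: "set l \<subseteq> {1..B}"
  shows "count_list (concat (map (\<lambda>c. bar s6 # x a c) l)) s6 = 0"
    and "count_list (concat (map (\<lambda>c. bar s6 # x a c) l)) (bar s6) = length l"
proof -
  have "s6 \<notin> set (x a c)" "bar s6 \<notin> set (x a c)" if "c \<in> set l" for c
    using x_Sigma[OF a] l that new_fresh by blast+
  then have "count_list (bar s6 # x a c) s6 = 0" "count_list (bar s6 # x a c) (bar s6) = 1"
    if "c \<in> set l" for c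
    using that syms_distinct by simp_all
  then show "count_list (concat (map (\<lambda>c. bar s6 # x a c) l)) s6 = 0"
    "count_list (concat (map (\<lambda>c. bar s6 # x a c) l)) (bar s6) = length l"
    using sum_list_map_eq_const[of l "\<lambda>c. count_list (bar s6 # x a c) s6" 0]
      sum_list_map_eq_const[of l "\<lambda>c. count_list (bar s6 # x a c) (bar s6)" 1]
    by (simp_all add: count_list_concat o_def)
qed

lemma count_rows:
  assumes "a \<le> A + 1"
  shows "count_list (concat (map row [1..<a])) s6 = (a - 1) * B"
    and "count_list (concat (map row [1..<a])) (bar s6) = (a - 1) * B"
proof -
  have "count_list (row i) s6 = B \<and> count_list (row i) (bar s6) = B" if "i \<in> set [1..<a]" for i
  proof -
    have "i \<in> {1..A}" "set [1..<B+1] \<subseteq> {1..B}" using that assms by auto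
    from count_cells[OF this] show ?thesis
      using syms_distinct by (simp add: row_def count_list_replicate)
  qed
  then show "count_list (concat (map row [1..<a])) s6 = (a - 1) * B"
    "count_list (concat (map row [1..<a])) (bar s6) = (a - 1) * B"
    using sum_list_map_eq_const[of "[1..<a]" "\<lambda>i. count_list (row i) s6" B]
      sum_list_map_eq_const[of "[1..<a]" "\<lambda>i. count_list (row i) (bar s6)" B]
    by (simp_all add: count_list_concat o_def)
qed

lemma count_outer: "count_list y1 s6 = 0" "count_list y1 (bar s6) = 0"
  "count_list y2 s6 = 0" "count_list y2 (bar s6) = 0"
  using y1_Sigma y2_Sigma new_fresh by (auto intro: count_notin)

lemma count_head: "count_list head s6 = B" "count_list head (bar s6) = 0"
  using syms_distinct by (auto simp: head_def count_list_concat count_list_replicate o_def sum_list_replicate)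

lemma count_tail: "count_list tail s6 = B" "count_list tail (bar s6) = B"
  using syms_distinct by (auto simp: tail_def count_list_concat count_list_replicate o_def sum_list_replicate)

lemma count_T: "count_list T s6 = A * B + 2 * B" "count_list T (bar s6) = A * B + B"
  using count_rows[of "A + 1"] count_head count_tail count_outer by (simp_all add: T_eq body_def)

lemma card_positions_T: "card {q. q < length T \<and> T ! q = z} = count_list T z"
  using card_positions_eq_count_list[of "length T" T z] by simp

text \<open>Before a cell of column c in row a lie the head (B copies of 6), a - 1 full rows (B copies
  of 6 and of bar 6 each) and c copies of bar 6 of row a.\<close>

lemma count_before_Cell:
  assumes p: "p < length T" and l: "kind p = Cell a c"
  shows "card {q. q < p \<and> T ! q = s6} = a * B"
    and "card {q. q < p \<and> T ! q = bar s6} + B = a * B + c"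
proof -
  note ac = Cell_position(1,2)[OF p l]
  obtain k where k: "k < length (x a c)" "p = length (concat (map snd (chunks_before a c))) + k"
    using Cell_position(3)[OF p l] by blast
  have "T = concat (map snd (chunks_before a c)) @ x a c @ concat (map snd (chunks_after a c))"
    using chunks_split[OF ac] concat_chunks by (metis concat_append concat.simps(2) list.simps(9)
        map_append snd_conv)
  then have "take p T = concat (map snd (chunks_before a c)) @ take k (x a c)" using k by simp
  moreover have "count_list (take k (x a c)) z = 0" if "z \<notin> \<Sigma>" for z
    using x_Sigma[OF ac] that by (auto dest: in_set_takeD intro!: count_notin)
  ultimately have before: "card {q. q < p \<and> T ! q = z} = count_list (concat (map snd (chunks_before a c))) z"
    if "z \<notin> \<Sigma>" for z
    using card_positions_eq_count_list[of p T z] p that by simp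
  have "set [1..<c] \<subseteq> {1..B}" using ac by auto
  note cells = count_cells[OF ac(1) this] and rows = count_rows[of a]
  obtain a' c' where "a = Suc a'" "c = Suc c'" using ac by (cases a; cases c) auto
  then show "card {q. q < p \<and> T ! q = s6} = a * B"
    "card {q. q < p \<and> T ! q = bar s6} + B = a * B + c"
    using before new_fresh cells rows ac count_head count_outer syms_distinct
    by (simp_all add: concat_chunks_before)
qed

section \<open>Pairs of gadget symbols\<close>

definition "pairs_with R S = {p \<in> R. T ! fst p \<in> S}"

abbreviation "pairs5 R \<equiv> pairs_with R {s5, bar s5}"
abbreviation "pairs6 R \<equiv> pairs_with R {s6, bar s6}"
abbreviation "pairs7 R \<equiv> pairs_with R {s7, bar s7}"

lemma pairs_with_subset: "pairs_with R S \<subseteq> R"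
  by (auto simp: pairs_with_def)

lemma finite_pairs_with: "valid_structure bar T R \<Longrightarrow> finite (pairs_with R S)"
  using valid_structure_finite pairs_with_subset finite_subset by metis

lemma s5_pair_shape:
  assumes v: "valid_structure bar T R" and ij: "(i, j) \<in> R" and s: "T ! i \<in> {s5, bar s5}"
  shows "T ! i = s5" "head_start \<le> i" "i < head_start + B"
    and "\<exists>m<B. j = head_start + B + 2 * m + 1"
proof -
  note f = valid_structure_pairD[OF v ij]
  have il: "i < length T" using f by simp
  show "T ! i = s5"
  proof (rule ccontr)
    assume "T ! i \<noteq> s5"
    then have "T ! i = bar s5" "T ! j = s5" using s f(3) bar_inv by auto
    then show False using bar_s5_position[OF il] s5_position[OF f(2)] f(1) by auto
  qed
  then show "head_start \<le> i" "i < head_start + B" using s5_position[OF il] by auto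
  show "\<exists>m<B. j = head_start + B + 2 * m + 1"
    using bar_s5_position[OF f(2)] f(3) \<open>T ! i = s5\<close> by simp
qed

text \<open>The 6 just before the partner of a matched 5 is enclosed by that pair, and no bar 6 lies
  inside it; so that 6 stays unpaired.\<close>

lemma s5_pair_blocks_s6:
  assumes v: "valid_structure bar T R" and ij: "(i, j) \<in> R" and s: "T ! i \<in> {s5, bar s5}"
  shows "T ! (j - 1) = s6" "head_start + B \<le> j - 1" "j - 1 < head_start + 3 * B" "0 < j"
    and "\<forall>(a, b)\<in>R. a \<noteq> j - 1 \<and> b \<noteq> j - 1"
proof -
  note f = valid_structure_pairD[OF v ij] and shape = s5_pair_shape[OF v ij s]
  obtain m where m: "m < B" "j = head_start + B + 2 * m + 1" using shape(4) by blast
  show t6: "T ! (j - 1) = s6" using T_nth_head_s6[OF m(1)] m(2) by simp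
  show "head_start + B \<le> j - 1" "j - 1 < head_start + 3 * B" "0 < j" using m by auto
  have False if ab: "(a, b) \<in> R" and touch: "a = j - 1 \<or> b = j - 1" for a b
  proof -
    note g = valid_structure_pairD[OF v ab]
    have "(a, b) \<noteq> (i, j)" using touch t6 shape(1) syms_distinct m by auto
    note nc = not_crossing_either_way[OF v ij ab this]
    from touch show False
    proof
      assume a: "a = j - 1"
      then have "b \<noteq> j" using nc by (auto simp: crossing_def)
      then have "j < b" using g a m by auto
      then show False using nc a shape(2,3) m by (auto simp: crossing_def)
    next
      assume b: "b = j - 1"
      then have "T ! a = bar s6" using g t6 bar_eq_iff by metis
      have "a \<noteq> i" using nc b by (auto simp: crossing_def)
      moreover have "\<not> i < a"
      proof
        assume "i < a"
        then have "head_start \<le> a \<and> a < head_start + 3 * B" using shape g b m by auto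
        then show False using bar_s6_position[of a] \<open>T ! a = bar s6\<close> g by auto
      qed
      ultimately have "a < i" by auto
      then show False using nc b shape(2,3) m by (auto simp: crossing_def)
    qed
  qed
  then show "\<forall>(a, b)\<in>R. a \<noteq> j - 1 \<and> b \<noteq> j - 1" by blast
qed

lemma s7_pair_shape:
  assumes v: "valid_structure bar T R" and ij: "(i, j) \<in> R" and s: "T ! i \<in> {s7, bar s7}"
  shows "T ! i = s7" "\<exists>m<B. i = tail_start + B + 2 * m"
    and "tail_start + 3 * B \<le> j" "j < tail_start + 4 * B"
proof -
  note f = valid_structure_pairD[OF v ij]
  have il: "i < length T" using f by simp
  show "T ! i = s7"
  proof (rule ccontr)
    assume "T ! i \<noteq> s7"
    then have "T ! i = bar s7" "T ! j = s7" using s f(3) bar_inv by auto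
    then show False using bar_s7_position[OF il] s7_position[OF f(2)] f(1) by auto
  qed
  then show "\<exists>m<B. i = tail_start + B + 2 * m" using s7_position[OF il] by auto
  show "tail_start + 3 * B \<le> j" "j < tail_start + 4 * B"
    using bar_s7_position[OF f(2)] f(3) \<open>T ! i = s7\<close> by auto
qed

lemma s7_pair_blocks_s6:
  assumes v: "valid_structure bar T R" and ij: "(i, j) \<in> R" and s: "T ! i \<in> {s7, bar s7}"
  shows "T ! (i + 1) = s6" "tail_start + B < i + 1" "i + 1 < tail_start + 4 * B"
    and "\<forall>(a, b)\<in>R. a \<noteq> i + 1 \<and> b \<noteq> i + 1"
proof -
  note f = valid_structure_pairD[OF v ij] and shape = s7_pair_shape[OF v ij s]
  obtain m where m: "m < B" "i = tail_start + B + 2 * m" using shape(2) by blast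
  show t6: "T ! (i + 1) = s6" using T_nth_tail_s6[OF m(1)] m(2) by simp
  show "tail_start + B < i + 1" "i + 1 < tail_start + 4 * B" using m by auto
  have False if ab: "(a, b) \<in> R" and touch: "a = i + 1 \<or> b = i + 1" for a b
  proof -
    note g = valid_structure_pairD[OF v ab]
    have "(a, b) \<noteq> (i, j)" using touch t6 shape(1) f(3) syms_distinct g by auto
    note nc = not_crossing_either_way[OF v ij ab this]
    from touch show False
    proof
      assume a: "a = i + 1"
      then have "T ! b = bar s6" using g t6 by simp
      have "b \<noteq> j" using nc a by (auto simp: crossing_def)
      moreover have "\<not> b < j"
      proof
        assume "b < j"
        then have "tail_start + B \<le> b \<and> b < tail_start + 4 * B" using g a m shape(4) by auto
        then show False using bar_s6_position[of b] \<open>T ! b = bar s6\<close> g by auto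
      qed
      ultimately have "j < b" by auto
      then show False using nc a shape(3,4) m f by (auto simp: crossing_def)
    next
      assume b: "b = i + 1"
      then have "a \<noteq> i" using nc by (auto simp: crossing_def)
      then have "a < i" using g b by auto
      then show False using nc b f shape(3,4) m by (auto simp: crossing_def)
    qed
  qed
  then show "\<forall>(a, b)\<in>R. a \<noteq> i + 1 \<and> b \<noteq> i + 1" by blast
qed

abbreviation "blocked5 R \<equiv> (\<lambda>p. snd p - 1) ` pairs5 R"
abbreviation "blocked7 R \<equiv> (\<lambda>p. fst p + 1) ` pairs7 R"

lemma blocked5:
  assumes v: "valid_structure bar T R"
  shows "card (blocked5 R) = card (pairs5 R)"
    and "k \<in> blocked5 R \<Longrightarrow> T ! k = s6 \<and> head_start + B \<le> k \<and> k < head_start + 3 * B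
      \<and> (\<forall>(a, b)\<in>R. a \<noteq> k \<and> b \<noteq> k)"
proof -
  have "inj_on (\<lambda>p. snd p - 1) (pairs_with R {s5, bar s5})"
  proof (rule inj_onI)
    fix p q assume pq: "p \<in> pairs_with R {s5, bar s5}" "q \<in> pairs_with R {s5, bar s5}"
      "snd p - 1 = snd q - 1"
    then have "0 < snd p" "0 < snd q"
      using s5_pair_blocks_s6(4)[OF v, of "fst p" "snd p"] s5_pair_blocks_s6(4)[OF v, of "fst q" "snd q"]
      by (auto simp: pairs_with_def)
    then have "snd p = snd q" using pq(3) by simp
    then show "p = q"
      using valid_structure_shared_endpoint[OF v, of p q] pq by (auto simp: pairs_with_def)
  qed
  then show "card (blocked5 R) = card (pairs5 R)" by (rule card_image)
  assume "k \<in> blocked5 R"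
  then obtain i j where "(i, j) \<in> R" "T ! i \<in> {s5, bar s5}" "k = j - 1"
    by (auto simp: pairs_with_def)
  then show "T ! k = s6 \<and> head_start + B \<le> k \<and> k < head_start + 3 * B
      \<and> (\<forall>(a, b)\<in>R. a \<noteq> k \<and> b \<noteq> k)"
    using s5_pair_blocks_s6[OF v] by blast
qed

lemma blocked7:
  assumes v: "valid_structure bar T R"
  shows "card (blocked7 R) = card (pairs7 R)"
    and "k \<in> blocked7 R \<Longrightarrow> T ! k = s6 \<and> tail_start + B < k \<and> k < tail_start + 4 * B
      \<and> (\<forall>(a, b)\<in>R. a \<noteq> k \<and> b \<noteq> k)"
proof -
  have "inj_on (\<lambda>p. fst p + 1) (pairs_with R {s7, bar s7})"
    using valid_structure_shared_endpoint[OF v] by (intro inj_onI) (auto simp: pairs_with_def)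
  then show "card (blocked7 R) = card (pairs7 R)" by (rule card_image)
  assume "k \<in> blocked7 R"
  then obtain i j where "(i, j) \<in> R" "T ! i \<in> {s7, bar s7}" "k = i + 1"
    by (auto simp: pairs_with_def)
  then show "T ! k = s6 \<and> tail_start + B < k \<and> k < tail_start + 4 * B
      \<and> (\<forall>(a, b)\<in>R. a \<noteq> k \<and> b \<noteq> k)"
    using s7_pair_blocks_s6[OF v] by blast
qed

lemma pairs6_zone_bound:
  assumes v: "valid_structure bar T R" and R': "R' \<subseteq> pairs6 R"
    and inside: "\<And>i j. (i, j) \<in> R' \<Longrightarrow> i \<in> Z \<and> j \<in> Z" and Z: "finite Z"
    and K: "K \<subseteq> Z" "\<And>k. k \<in> K \<Longrightarrow> T ! k = s6 \<and> (\<forall>(a, b)\<in>R. a \<noteq> k \<and> b \<noteq> k)"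
  shows "card R' \<le> card {q\<in>Z. T ! q = bar s6}"
    and "card R' + card K \<le> card {q\<in>Z. T ! q = s6}"
proof -
  have sub: "R' \<subseteq> R" using R' pairs_with_subset by blast
  have syms: "T ! i = s6 \<or> T ! i = bar s6" if "(i, j) \<in> R'" for i j
    using R' that by (auto simp: pairs_with_def)
  show "card R' + card K \<le> card {q\<in>Z. T ! q = s6}"
    by (rule card_pairs_le_count[OF v bar_inv sub _ Z K]) (use syms inside in blast)
  have "card R' + card ({} :: nat set) \<le> card {q\<in>Z. T ! q = bar s6}"
    by (rule card_pairs_le_count[OF v bar_inv sub _ Z]) (use syms inside bar_inv in auto)
  then show "card R' \<le> card {q\<in>Z. T ! q = bar s6}" by simp
qed

lemma pairs6_within: "valid_structure bar T R \<Longrightarrow> (i, j) \<in> pairs6 R \<Longrightarrow> i < j \<and> j < length T"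
  using valid_structure_pairD pairs_with_subset by blast

lemma gadget_bound:
  assumes v: "valid_structure bar T R"
  shows "card (pairs5 R) + card (pairs7 R) + 2 * card (pairs6 R) \<le> 2 * A * B + 3 * B"
proof -
  define K where "K = blocked5 R \<union> blocked7 R"
  have "blocked5 R \<inter> blocked7 R = {}"
    using blocked5(2)[OF v] blocked7(2)[OF v] by fastforce
  moreover have "finite (blocked5 R)" "finite (blocked7 R)"
    using finite_pairs_with[OF v] by auto
  ultimately have cK: "card K = card (pairs5 R) + card (pairs7 R)"
    unfolding K_def using blocked5(1)[OF v] blocked7(1)[OF v] by (simp add: card_Un_disjoint)
  have KT: "K \<subseteq> {..<length T}"
    using blocked5(2)[OF v] blocked7(2)[OF v] length_T unfolding K_def by fastforce
  have KU: "T ! k = s6 \<and> (\<forall>(a, b)\<in>R. a \<noteq> k \<and> b \<noteq> k)" if "k \<in> K" for k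
    using that blocked5(2)[OF v] blocked7(2)[OF v] unfolding K_def by blast
  have inside: "i \<in> {..<length T} \<and> j \<in> {..<length T}" if "(i, j) \<in> pairs6 R" for i j
    using pairs6_within[OF v that] by simp
  have "{q \<in> {..<length T}. T ! q = z} = {q. q < length T \<and> T ! q = z}" for z by auto
  then have "card (pairs6 R) \<le> count_list T (bar s6)" "card (pairs6 R) + card K \<le> count_list T s6"
    using pairs6_zone_bound[OF v subset_refl inside _ KT KU] card_positions_T by simp_all
  then show ?thesis using cK count_T by simp
qed

lemma pairs6_split_at:
  assumes v: "valid_structure bar T R" and sig: "T ! p1 \<in> \<Sigma>" "T ! p2 \<in> \<Sigma>"
    and straddle: "\<And>i j. (i, j) \<in> R \<Longrightarrow> T ! i \<in> gadget_syms \<Longrightarrow>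
      \<not> (i < p1 \<and> p1 < j) \<and> \<not> (i < p2 \<and> p2 < j)"
  shows "card (pairs6 R) \<le> card {p \<in> pairs6 R. snd p < p1}
    + card {p \<in> pairs6 R. p1 < fst p \<and> snd p < p2} + card {p \<in> pairs6 R. p2 < fst p}"
    (is "_ \<le> card ?Ra + card ?Rb + card ?Rc")
proof -
  have "pairs6 R \<subseteq> ?Ra \<union> ?Rb \<union> ?Rc"
  proof
    fix p assume p: "p \<in> pairs6 R"
    obtain i j where ij: "p = (i, j)" by (cases p)
    have "(i, j) \<in> R" "T ! i \<in> {s6, bar s6}" using p ij by (auto simp: pairs_with_def)
    moreover from this have "T ! j \<in> {s6, bar s6}"
      using valid_structure_pairD(3)[OF v] bar_inv by auto
    ultimately have "T ! i \<in> gadget_syms" "i \<noteq> p1" "j \<noteq> p1" "i \<noteq> p2" "j \<noteq> p2"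
      using sig gadget_syms_not_Sigma by (auto simp: gadget_syms_def)
    then show "p \<in> ?Ra \<union> ?Rb \<union> ?Rc"
      using straddle[OF \<open>(i, j) \<in> R\<close>] pairs6_within[OF v] p ij by auto
  qed
  moreover have "finite ?Ra" "finite ?Rb" "finite ?Rc" using finite_pairs_with[OF v] by auto
  ultimately show ?thesis
    by (meson card_Un_le card_mono finite_UnI order_trans add_le_mono le_refl)
qed

lemma card_symbol_split:
  "p \<le> m \<Longrightarrow> T ! p \<in> \<Sigma> \<Longrightarrow> z \<notin> \<Sigma> \<Longrightarrow>
    card {q. q < m \<and> T ! q = z} = card {q. q < p \<and> T ! q = z} + card {q. p < q \<and> q < m \<and> T ! q = z}"
  by (rule card_less_split) auto

text \<open>Two cells at p1 <= p2 that no gadget pair straddles cut T into three zones, each of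
  which must balance its own 6's and bar 6's; the column offset of the two cells then costs
  |c1 - c2| in the middle zone.\<close>

lemma gadget_bound_cut:
  assumes v: "valid_structure bar T R" and p12: "p1 \<le> p2" "p2 < length T"
    and l1: "kind p1 = Cell a1 c1" and l2: "kind p2 = Cell a2 c2"
    and straddle: "\<And>i j. (i, j) \<in> R \<Longrightarrow> T ! i \<in> gadget_syms \<Longrightarrow>
      \<not> (i < p1 \<and> p1 < j) \<and> \<not> (i < p2 \<and> p2 < j)"
  shows "card (pairs5 R) + card (pairs7 R) + 2 * card (pairs6 R) + (max c1 c2 - min c1 c2)
    \<le> 2 * A * B + 3 * B"
proof -
  have p1: "p1 < length T" using p12 by simp
  have sig: "T ! p1 \<in> \<Sigma>" "T ! p2 \<in> \<Sigma>" using kind_symbol[OF p1] kind_symbol[OF p12(2)] l1 l2 by auto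
  define Z1 where "Z1 = {q. q < p1}"
  define Z2 where "Z2 = {q. p1 < q \<and> q < p2}"
  define Z3 where "Z3 = {q. p2 < q \<and> q < length T}"
  define Ra where "Ra = {p \<in> pairs6 R. snd p < p1}"
  define Rb where "Rb = {p \<in> pairs6 R. p1 < fst p \<and> snd p < p2}"
  define Rc where "Rc = {p \<in> pairs6 R. p2 < fst p}"
  define u where "u Z = card {q\<in>Z. T ! q = bar s6}" for Z
  define t where "t Z = card {q\<in>Z. T ! q = s6}" for Z
  have n6: "card (pairs6 R) \<le> card Ra + card Rb + card Rc"
    unfolding Ra_def Rb_def Rc_def by (rule pairs6_split_at[OF v sig straddle])
  have B5: "blocked5 R \<subseteq> Z1"
    using blocked5(2)[OF v] Cell_position(4)[OF p1 l1] by (fastforce simp: Z1_def)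
  have B7: "blocked7 R \<subseteq> Z3"
    using blocked7(2)[OF v] Cell_position(5)[OF p12(2) l2] length_T by (fastforce simp: Z3_def)
  have in1: "i \<in> Z1 \<and> j \<in> Z1" if "(i, j) \<in> Ra" for i j
    using that pairs6_within[OF v, of i j] by (auto simp: Ra_def Z1_def)
  have in2: "i \<in> Z2 \<and> j \<in> Z2" if "(i, j) \<in> Rb" for i j
    using that pairs6_within[OF v, of i j] by (auto simp: Rb_def Z2_def)
  have in3: "i \<in> Z3 \<and> j \<in> Z3" if "(i, j) \<in> Rc" for i j
    using that pairs6_within[OF v, of i j] by (auto simp: Rc_def Z3_def)
  note zone = pairs6_zone_bound[OF v]
  have fin: "finite Z1" "finite Z2" "finite Z3" by (simp_all add: Z1_def Z2_def Z3_def)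
  have Ra: "card Ra \<le> u Z1" "card Ra + card (pairs5 R) \<le> t Z1"
    using zone[of Ra Z1 "blocked5 R", OF _ in1 fin(1) B5] blocked5[OF v]
    unfolding u_def t_def by (auto simp: Ra_def)
  have Rb: "card Rb \<le> u Z2" "card Rb \<le> t Z2"
    using zone[of Rb Z2 "{}", OF _ in2 fin(2)] unfolding u_def t_def by (auto simp: Rb_def)
  have Rc: "card Rc \<le> u Z3" "card Rc + card (pairs7 R) \<le> t Z3"
    using zone[of Rc Z3 "blocked7 R", OF _ in3 fin(3) B7] blocked7[OF v]
    unfolding u_def t_def by (auto simp: Rc_def)
  have Z1: "{q \<in> Z1. T ! q = z} = {q. q < p1 \<and> T ! q = z}" for z by (auto simp: Z1_def)
  have counts: "u Z1 + B = a1 * B + c1" "t Z1 = a1 * B" "u Z1 + u Z2 + B = a2 * B + c2"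
    "t Z1 + t Z2 = a2 * B" "u Z1 + u Z2 + u Z3 = A * B + B" "t Z1 + t Z2 + t Z3 = A * B + 2 * B"
    using card_symbol_split[OF p12(1) sig(1)] card_symbol_split[OF less_imp_le[OF p12(2)] sig(2)]
      count_before_Cell[OF p1 l1] count_before_Cell[OF p12(2) l2] count_T card_positions_T
      new_fresh(3,4)
    unfolding u_def t_def Z1 by (simp_all add: Z2_def Z3_def)
  show ?thesis
  proof (cases "c1 \<le> c2")
    case True
    then have "max c1 c2 - min c1 c2 = c2 - c1" by simp
    with Ra Rb Rc counts n6 True show ?thesis by linarith
  next
    case False
    then have "max c1 c2 - min c1 c2 = c1 - c2" by simp
    with Ra Rb Rc counts n6 False show ?thesis by linarith
  qed
qed

section \<open>Pairs of Sigma-symbols\<close>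

lemma concat_filter_chunks:
  assumes "\<not> P Gadget"
  shows "concat (map snd (filter (P \<circ> fst) chunks)) = (if P Outer then y1 else []) @
    concat (map (\<lambda>a. concat (map (\<lambda>c. if P (Cell a c) then x a c else []) [1..<B+1])) [1..<A+1]) @
    (if P Outer then y2 else [])"
proof -
  have row: "concat (map snd (filter (P \<circ> fst) (concat (map (cell_chunks a) l)))) =
      concat (map (\<lambda>c. if P (Cell a c) then x a c else []) l)" for a l
    using assms by (induction l) (auto simp: cell_chunks_def)
  have "concat (map snd (filter (P \<circ> fst) (concat (map row_chunks l)))) =
      concat (map (\<lambda>a. concat (map (\<lambda>c. if P (Cell a c) then x a c else []) [1..<B+1])) l)" for l
    using assms by (induction l) (auto simp: row_chunks_def row)
  then show ?thesis using assms unfolding chunks_def by simp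
qed

lemma concat_filter_cells:
  "concat (map snd (filter (is_cell \<circ> fst) chunks)) =
    concat (map (\<lambda>a. concat (map (\<lambda>b. x a b) [1..<B+1])) [1..<A+1])"
  by (subst concat_filter_chunks) (auto simp: is_cell_def)

lemma concat_filter_column:
  assumes "b \<in> {1..B}"
  shows "concat (map snd (filter ((\<lambda>l. l = Outer \<or> (\<exists>a. l = Cell a b)) \<circ> fst) chunks)) = y1 @ column b @ y2"
  by (subst concat_filter_chunks) (use assms in \<open>auto simp: concat_map_if_eq_single\<close>)

lemma cells_no_match:
  assumes pq: "p < q" "q < length T" and lp: "kind p = Cell a c" and lq: "kind q = Cell a' c'"
  shows "T ! q \<noteq> bar (T ! p)"
proof -
  let ?X = "concat (map (\<lambda>a. concat (map (\<lambda>b. x a b) [1..<B+1])) [1..<A+1])"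
  obtain f where f: "embeds f ?X T"
    and hit: "\<And>p. p < length T \<Longrightarrow> is_cell (kind p) \<Longrightarrow> p \<in> f ` {..<length ?X}"
    using embeds_filter_chunks[of is_cell chunks] unfolding concat_chunks concat_filter_cells by blast
  obtain i j where ij: "i < length ?X" "p = f i" "j < length ?X" "q = f j"
    using hit[of p] hit[of q] pq lp lq by (force simp: is_cell_def)
  have "i < j" using pq ij f by (simp add: embeds_def strict_mono_less)
  then have "?X ! j \<noteq> bar (?X ! i)" using no_match ij(3) unfolding Let_def by blast
  then show ?thesis using f ij by (simp add: embeds_def)
qed

text \<open>A pair of Sigma-symbols with an end in a cell has its other end in y1 or y2: it cannot
  end in another cell, and Sigma-symbols occur only in cells and in the outer strings. Hence it
  encloses the whole gadget region on one side of the cell, and no gadget pair can straddle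
  that cell.\<close>

lemma cell_end_not_straddled:
  assumes v: "valid_structure bar T R" and ij: "(i, j) \<in> R" and si: "T ! i \<in> \<Sigma>"
    and e: "e = i \<or> e = j" and le: "kind e = Cell a c"
    and ij': "(i', j') \<in> R" and g: "T ! i' \<in> gadget_syms"
  shows "\<not> (i' < e \<and> e < j')"
proof
  assume lt: "i' < e \<and> e < j'"
  note f = valid_structure_pairD[OF v ij] and f' = valid_structure_pairD[OF v ij']
  have sj: "T ! j \<in> \<Sigma>" using f(3) Sigma_closed si by simp
  have el: "e < length T" using e f by auto
  define other where "other = (if e = i then j else i)"
  have ol: "other < length T" using f by (auto simp: other_def)
  have "kind other = Outer"
  proof (cases "kind other")
    case Gadget then show ?thesis
      using kind_symbol[OF ol] si sj gadget_syms_not_Sigma by (auto simp: other_def split: if_splits)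
  next
    case (Cell a' c')
    then show ?thesis
      using cells_no_match[OF f(1,2)] le e f(1,3) by (auto simp: other_def split: if_splits)
  qed
  then have "other < head_start \<or> tail_start + 4 * B \<le> other" using Outer_position[OF ol] by simp
  moreover have "head_start + 3 * B \<le> e" "e < tail_start" using Cell_position(4,5)[OF el le] by auto
  moreover have "head_start \<le> i'" "j' < tail_start + 4 * B"
    using gadget_position[of i'] gadget_position[of j'] bar_gadget_syms[OF g] g f' by auto
  moreover have "\<not> crossing (i, j) (i', j')"
    using valid_structure_not_crossing[OF v ij ij'] si g gadget_syms_not_Sigma by auto
  ultimately show False using e lt f(1) by (auto simp: other_def crossing_def split: if_splits)
qed

lemma Sigma_pair_ends:
  assumes v: "valid_structure bar T R" and "(i, j) \<in> pairs_with R \<Sigma>" and "e = i \<or> e = j"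
  shows "T ! e \<in> \<Sigma>" "e < length T" "kind e \<noteq> Gadget"
proof -
  have ij: "(i, j) \<in> R" "T ! i \<in> \<Sigma>" using assms(2) by (auto simp: pairs_with_def)
  note f = valid_structure_pairD[OF v ij(1)]
  show "T ! e \<in> \<Sigma>" "e < length T" using f ij(2) Sigma_closed assms(3) by auto
  then show "kind e \<noteq> Gadget" using kind_symbol gadget_syms_not_Sigma by blast
qed

lemma weight_pairs_in_column:
  assumes v: "valid_structure bar T R" and b: "b \<in> {1..B}" and S: "S \<subseteq> pairs_with R \<Sigma>"
    and col: "\<And>i j e a c. (i, j) \<in> S \<Longrightarrow> e = i \<or> e = j \<Longrightarrow> kind e = Cell a c \<Longrightarrow> c = b"
  shows "struct_weight w T S \<le> WRNA bar w (y1 @ column b @ y2)"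
proof -
  define P where "P l \<longleftrightarrow> l = Outer \<or> (\<exists>a. l = Cell a b)" for l
  obtain f where f: "embeds f (y1 @ column b @ y2) T"
    and hit: "\<And>p. p < length T \<Longrightarrow> P (kind p) \<Longrightarrow> p \<in> f ` {..<length (y1 @ column b @ y2)}"
    using embeds_filter_chunks[of P chunks] unfolding concat_chunks P_def concat_filter_column[OF b]
    by blast
  have "e \<in> f ` {..<length (y1 @ column b @ y2)}" if "(i, j) \<in> S" "e = i \<or> e = j" for i j e
  proof -
    note ends = Sigma_pair_ends[OF v subsetD[OF S that(1)] that(2)]
    have "P (kind e)" using ends(3) col[OF that] by (cases "kind e") (auto simp: P_def)
    then show ?thesis using hit ends(2) by blast
  qed
  moreover have "S \<subseteq> R" using S pairs_with_subset by blast
  ultimately show ?thesis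
    using struct_weight_le_WRNA_embedded[OF f valid_structure_subset[OF v]] by blast
qed

lemma weight_cells_in_columns:
  assumes D: "finite D"
  shows "sum_list (map w (concat (map (\<lambda>a. concat (map (\<lambda>c. if c \<in> D then x a c else [])
    [1..<B+1])) [1..<A+1]))) \<le> card D * (A * W)"
proof -
  have row: "sum_list (map (\<lambda>c. sum_list (map w (if c \<in> D then x a c else []))) [1..<B+1])
      \<le> card D * W" if a: "a \<in> set [1..<A+1]" for a
  proof -
    have "sum_list (map (\<lambda>c. sum_list (map w (if c \<in> D then x a c else []))) [1..<B+1])
        = sum_list (map (\<lambda>c. if c \<in> D then sum_list (map w (x a c)) else 0) [1..<B+1])"
      by (intro arg_cong[where f = sum_list] map_cong) auto
    also have "\<dots> = (\<Sum>c\<in>{1..<B+1}. if c \<in> D then sum_list (map w (x a c)) else 0)"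
      by (simp add: sum_list_distinct_conv_sum_set)
    also have "\<dots> = (\<Sum>c\<in>{1..<B+1} \<inter> D. sum_list (map w (x a c)))"
      by (simp add: sum.inter_restrict)
    also have "\<dots> \<le> card ({1..<B+1} \<inter> D) * W"
      using sum_bounded_above[of "{1..<B+1} \<inter> D" "\<lambda>c. sum_list (map w (x a c))" W] x_weight a
      by auto
    also have "\<dots> \<le> card D * W" using D by (intro mult_le_mono1 card_mono) auto
    finally show ?thesis .
  qed
  have "sum_list (map w (concat (map (\<lambda>a. concat (map (\<lambda>c. if c \<in> D then x a c else [])
      [1..<B+1])) [1..<A+1]))) \<le> length [1..<A+1] * (card D * W)"
    unfolding sum_list_map_concat map_map o_def by (rule sum_list_map_le_const) (rule row)
  then show ?thesis by (simp add: algebra_simps)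
qed

text \<open>Each remaining Sigma-pair is charged to one of its ends lying in a cell of a column in D;
  distinct pairs get distinct ends, so their weight is at most that of all those cells.\<close>

lemma weight_pairs_off_column:
  assumes v: "valid_structure bar T R" and D: "finite D" and S: "S \<subseteq> pairs_with R \<Sigma>"
    and off: "\<And>p. p \<in> S \<Longrightarrow> \<exists>e a c. (e = fst p \<or> e = snd p) \<and> kind e = Cell a c \<and> c \<in> D"
  shows "struct_weight w T S \<le> card D * (A * W)"
proof -
  define P where "P l \<longleftrightarrow> (\<exists>a c. l = Cell a c \<and> c \<in> D)" for l
  define X where "X = concat (map snd (filter (P \<circ> fst) chunks))"
  obtain g where g: "embeds g X T"
    and hit: "\<And>p. p < length T \<Longrightarrow> P (kind p) \<Longrightarrow> p \<in> g ` {..<length X}"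
    using embeds_filter_chunks[of P chunks] unfolding concat_chunks X_def by blast
  have X: "X = concat (map (\<lambda>a. concat (map (\<lambda>c. if c \<in> D then x a c else []) [1..<B+1])) [1..<A+1])"
    unfolding X_def by (subst concat_filter_chunks) (auto simp: P_def)
  define ep where "ep p = (SOME e. (e = fst p \<or> e = snd p) \<and> P (kind e))" for p
  have ep: "(ep p = fst p \<or> ep p = snd p) \<and> P (kind (ep p))" if "p \<in> S" for p
  proof -
    have "\<exists>e. (e = fst p \<or> e = snd p) \<and> P (kind e)" using off[OF that] by (auto simp: P_def)
    from someI_ex[OF this] show ?thesis unfolding ep_def .
  qed
  have ep_hit: "ep p \<in> g ` {..<length X}" and ep_w: "w (T ! fst p) = w (T ! ep p)" if "p \<in> S" for p
  proof -
    obtain i j where ij: "p = (i, j)" by (cases p)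
    with S that pairs_with_subset have ij: "p = (i, j)" "(i, j) \<in> R" by blast+
    have "(i, j) \<in> pairs_with R \<Sigma>" using S that ij by blast
    then have "ep p < length T" using Sigma_pair_ends(2)[OF v, of i j "ep p"] ep[OF that] ij by auto
    then show "ep p \<in> g ` {..<length X}" using hit ep[OF that] by blast
    show "w (T ! fst p) = w (T ! ep p)"
      using ep[OF that] valid_structure_pairD(3)[OF v ij(2)] w_bar ij by auto
  qed
  have "S \<subseteq> R" using S pairs_with_subset by blast
  have inj: "inj_on ep S"
    by (rule valid_structure_inj_on_endpoint[OF valid_structure_subset[OF v \<open>S \<subseteq> R\<close>]])
      (use ep in blast)
  have ginj: "inj_on g {..<length X}" using g strict_mono_imp_inj_on by (auto simp: embeds_def)
  have "struct_weight w T S = (\<Sum>p\<in>S. w (T ! ep p))"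
    unfolding struct_weight_def by (rule sum.cong) (auto simp: ep_w case_prod_beta)
  also have "\<dots> = (\<Sum>e\<in>ep ` S. w (T ! e))" using inj by (simp add: sum.reindex)
  also have "\<dots> \<le> (\<Sum>e\<in>g ` {..<length X}. w (T ! e))" using ep_hit by (intro sum_mono2) auto
  also have "\<dots> = (\<Sum>i<length X. w (T ! g i))" using ginj by (simp add: sum.reindex)
  also have "\<dots> = (\<Sum>i<length X. w (X ! i))" using g by (intro sum.cong) (auto simp: embeds_def)
  also have "\<dots> = sum_list (map w X)" by (simp add: sum_list_sum_nth atLeast0LessThan)
  also have "\<dots> \<le> card D * (A * W)" unfolding X by (rule weight_cells_in_columns[OF D])
  finally show ?thesis .
qed

definition "touched_columns R =
  {c. \<exists>i j e a. (i, j) \<in> pairs_with R \<Sigma> \<and> (e = i \<or> e = j) \<and> kind e = Cell a c}"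

lemma touched_columns_subset: "valid_structure bar T R \<Longrightarrow> touched_columns R \<subseteq> {1..B}"
  unfolding touched_columns_def using Sigma_pair_ends(2) Cell_position(2) by blast

lemma weight_Sigma_pairs:
  assumes v: "valid_structure bar T R" and b: "b \<in> {1..B}" and D: "touched_columns R \<subseteq> insert b D"
    and "finite D"
  shows "struct_weight w T (pairs_with R \<Sigma>) \<le> WRNA bar w (y1 @ column b @ y2) + card D * (A * W)"
proof -
  define S1 where "S1 = {p \<in> pairs_with R \<Sigma>. \<forall>e a c. (e = fst p \<or> e = snd p) \<and> kind e = Cell a c \<longrightarrow> c = b}"
  define S2 where "S2 = pairs_with R \<Sigma> - S1"
  have "struct_weight w T S1 \<le> WRNA bar w (y1 @ column b @ y2)"
    by (rule weight_pairs_in_column[OF v b]) (auto simp: S1_def)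
  moreover have "struct_weight w T S2 \<le> card D * (A * W)"
  proof (rule weight_pairs_off_column[OF v \<open>finite D\<close>])
    fix p assume p: "p \<in> S2"
    then obtain e a c where "e = fst p \<or> e = snd p" "kind e = Cell a c" "c \<noteq> b"
      by (auto simp: S1_def S2_def)
    moreover from this have "c \<in> touched_columns R"
      using p by (cases p) (auto simp: S2_def touched_columns_def)
    ultimately show "\<exists>e a c. (e = fst p \<or> e = snd p) \<and> kind e = Cell a c \<and> c \<in> D" using D by blast
  qed (auto simp: S2_def)
  moreover have "pairs_with R \<Sigma> = S1 \<union> S2" "S1 \<inter> S2 = {}" by (auto simp: S2_def S1_def)
  moreover have "finite S1" "finite S2"
    using finite_pairs_with[OF v, of \<Sigma>] by (auto simp: S1_def S2_def)
  ultimately show ?thesis using struct_weight_Un by (metis add_mono)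
qed

section \<open>Upper bound and the theorem\<close>

lemma struct_weight_decompose:
  assumes v: "valid_structure bar T R"
  shows "struct_weight w T R = 4 * (A * W) * (card (pairs5 R) + card (pairs7 R) + 2 * card (pairs6 R))
    + struct_weight w T (pairs_with R \<Sigma>)"
proof -
  have split: "R = ((pairs5 R \<union> pairs6 R) \<union> pairs7 R) \<union> pairs_with R \<Sigma>"
  proof
    show "R \<subseteq> ((pairs5 R \<union> pairs6 R) \<union> pairs7 R) \<union> pairs_with R \<Sigma>"
    proof
      fix p assume p: "p \<in> R"
      then have "fst p < length T" using valid_structure_pairD[OF v, of "fst p" "snd p"] by simp
      then have "T ! fst p \<in> \<Sigma> \<or> T ! fst p \<in> gadget_syms" by (rule symbol_cases)
      then show "p \<in> ((pairs5 R \<union> pairs6 R) \<union> pairs7 R) \<union> pairs_with R \<Sigma>"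
        using p by (auto simp: pairs_with_def gadget_syms_def)
    qed
  qed (auto simp: pairs_with_def)
  have "pairs5 R \<inter> pairs6 R = {}" "(pairs5 R \<union> pairs6 R) \<inter> pairs7 R = {}"
    "((pairs5 R \<union> pairs6 R) \<union> pairs7 R) \<inter> pairs_with R \<Sigma> = {}"
    using syms_distinct new_fresh by (auto simp: pairs_with_def)
  then have "struct_weight w T R = struct_weight w T (pairs5 R) + struct_weight w T (pairs6 R)
      + struct_weight w T (pairs7 R) + struct_weight w T (pairs_with R \<Sigma>)"
    using finite_pairs_with[OF v] by (subst split) (simp add: struct_weight_Un)
  moreover have "struct_weight w T (pairs5 R) = card (pairs5 R) * (4 * (A * W))"
    "struct_weight w T (pairs6 R) = card (pairs6 R) * (8 * (A * W))"
    "struct_weight w T (pairs7 R) = card (pairs7 R) * (4 * (A * W))"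
    by (rule struct_weight_const; auto simp: pairs_with_def w5 w6 w7 w_bar)+
  ultimately show ?thesis by (simp add: algebra_simps)
qed

lemma gadget_bound_touched:
  assumes v: "valid_structure bar T R" and C: "touched_columns R \<noteq> {}"
  shows "card (pairs5 R) + card (pairs7 R) + 2 * card (pairs6 R)
    + (Max (touched_columns R) - Min (touched_columns R)) \<le> 2 * A * B + 3 * B"
proof -
  let ?C = "touched_columns R"
  have fin: "finite ?C" using touched_columns_subset[OF v] finite_subset by blast
  have "Min ?C \<in> ?C" "Max ?C \<in> ?C" "Min ?C \<le> Max ?C" using fin C by auto
  then obtain i1 j1 e1 a1 i2 j2 e2 a2 where
    p1: "(i1, j1) \<in> pairs_with R \<Sigma>" "e1 = i1 \<or> e1 = j1" "kind e1 = Cell a1 (Min ?C)" and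
    p2: "(i2, j2) \<in> pairs_with R \<Sigma>" "e2 = i2 \<or> e2 = j2" "kind e2 = Cell a2 (Max ?C)"
    unfolding touched_columns_def by blast
  have straddle: "\<not> (i < e1 \<and> e1 < j) \<and> \<not> (i < e2 \<and> e2 < j)"
    if "(i, j) \<in> R" "T ! i \<in> gadget_syms" for i j
    using cell_end_not_straddled[OF v _ _ _ _ that] p1 p2 by (auto simp: pairs_with_def)
  have len: "e1 < length T" "e2 < length T"
    using Sigma_pair_ends(2)[OF v p1(1,2)] Sigma_pair_ends(2)[OF v p2(1,2)] by auto
  show ?thesis
  proof (cases "e1 \<le> e2")
    case True
    from gadget_bound_cut[OF v True len(2) p1(3) p2(3)] straddle \<open>Min ?C \<le> Max ?C\<close>
    show ?thesis by simp
  next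
    case False
    from gadget_bound_cut[OF v _ len(1) p2(3) p1(3)] straddle False \<open>Min ?C \<le> Max ?C\<close>
    show ?thesis by simp
  qed
qed

lemma upper_bound:
  "WRNA bar w T \<le> (8 * A + 12) * A * B * W + Max ((\<lambda>b. WRNA bar w (y1 @ column b @ y2)) ` {1..B})"
proof -
  obtain R where v: "valid_structure bar T R" and R: "struct_weight w T R = WRNA bar w T"
    by (rule WRNA_attained)
  let ?C = "touched_columns R" and ?M = "Max ((\<lambda>b. WRNA bar w (y1 @ column b @ y2)) ` {1..B})"
  define b where "b = (if ?C = {} then 1 else Min ?C)"
  define d where "d = (if ?C = {} then 0 else Max ?C - Min ?C)"
  have CB: "?C \<subseteq> {1..B}" by (rule touched_columns_subset[OF v])
  then have fin: "finite ?C" by (rule finite_subset) simp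
  have b: "b \<in> {1..B}"
  proof (cases "?C = {}")
    case False
    then have "Min ?C \<in> {1..B}" using Min_in[OF fin] CB by blast
    then show ?thesis using False by (simp add: b_def)
  qed (use B in \<open>simp add: b_def\<close>)
  have "card (?C - {b}) \<le> card {Min ?C<..Max ?C}" if "?C \<noteq> {}"
    using fin that by (intro card_mono) (auto simp: b_def less_le)
  then have cD: "card (?C - {b}) \<le> d" by (auto simp: d_def)
  have gadget: "card (pairs5 R) + card (pairs7 R) + 2 * card (pairs6 R) + d \<le> 2 * A * B + 3 * B"
    using gadget_bound[OF v] gadget_bound_touched[OF v] by (simp add: d_def)
  have "WRNA bar w (y1 @ column b @ y2) \<le> ?M" using b by (intro Max_ge) auto
  moreover have "?C \<subseteq> insert b (?C - {b})" by blast
  note weight_Sigma_pairs[OF v b this finite_Diff[OF fin]]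
  ultimately have Sigma: "struct_weight w T (pairs_with R \<Sigma>) \<le> ?M + card (?C - {b}) * (A * W)"
    by linarith
  have "WRNA bar w T = 4 * (A * W) * (card (pairs5 R) + card (pairs7 R) + 2 * card (pairs6 R))
      + struct_weight w T (pairs_with R \<Sigma>)"
    using struct_weight_decompose[OF v] R by simp
  also have "\<dots> \<le> 4 * (A * W) * (2 * A * B + 3 * B) + ?M"
    by (rule upper_bound_arith[OF gadget Sigma cD])
  also have "4 * (A * W) * (2 * A * B + 3 * B) = (8 * A + 12) * A * B * W"
    by (simp add: algebra_simps)
  finally show ?thesis .
qed

theorem WRNA_eq:
  "WRNA bar w T = (8 * A + 12) * A * B * W + Max ((\<lambda>b. WRNA bar w (y1 @ column b @ y2)) ` {1..B})"
proof (rule antisym[OF upper_bound])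
  have "Max ((\<lambda>b. WRNA bar w (y1 @ column b @ y2)) ` {1..B})
      \<in> (\<lambda>b. WRNA bar w (y1 @ column b @ y2)) ` {1..B}"
    using B by (intro Max_in) auto
  then show "(8 * A + 12) * A * B * W + Max ((\<lambda>b. WRNA bar w (y1 @ column b @ y2)) ` {1..B})
      \<le> WRNA bar w T"
    using lower_bound by auto
qed

end

theorem mainTheorem11:
  fixes bar :: "'a \<Rightarrow> 'a" and w :: "'a \<Rightarrow> nat" and \<Sigma> :: "'a set"
    and A B W :: nat and x :: "nat \<Rightarrow> nat \<Rightarrow> 'a list" and s5 s6 s7 :: 'a
    and y1 y2 :: "'a list"
  assumes bar_inv: "\<And>\<sigma>. bar (bar \<sigma>) = \<sigma>"
    and w_bar: "\<And>\<sigma>. w (bar \<sigma>) = w \<sigma>"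
    and Sigma_closed: "\<And>\<sigma>. \<sigma> \<in> \<Sigma> \<Longrightarrow> bar \<sigma> \<in> \<Sigma>"
    and A: "A \<ge> 1" and B: "B \<ge> 1" and W: "W \<ge> 1"
    and x_Sigma: "\<And>a b. a \<in> {1..A} \<Longrightarrow> b \<in> {1..B} \<Longrightarrow> set (x a b) \<subseteq> \<Sigma>"
    and x_weight: "\<And>a b. a \<in> {1..A} \<Longrightarrow> b \<in> {1..B} \<Longrightarrow> sum_list (map w (x a b)) \<le> W"
    and no_match: "let X = concat (map (\<lambda>a. concat (map (\<lambda>b. x a b) [1..<B+1])) [1..<A+1])
                   in \<forall>i j. i < j \<and> j < length X \<longrightarrow> X ! j \<noteq> bar (X ! i)"
    and new_distinct: "distinct [s5, bar s5, s6, bar s6, s7, bar s7]"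
    and new_fresh: "s5 \<notin> \<Sigma>" "bar s5 \<notin> \<Sigma>" "s6 \<notin> \<Sigma>" "bar s6 \<notin> \<Sigma>"
                   "s7 \<notin> \<Sigma>" "bar s7 \<notin> \<Sigma>"
    and w5: "w s5 = 4 * A * W" and w6: "w s6 = 8 * A * W" and w7: "w s7 = 4 * A * W"
    and y1_Sigma: "set y1 \<subseteq> \<Sigma>" and y2_Sigma: "set y2 \<subseteq> \<Sigma>"
  shows "WRNA bar w (y1 @ G bar s5 s6 s7 A B x @ y2) =
         (8 * A + 12) * A * B * W +
         Max ((\<lambda>b. WRNA bar w (y1 @ concat (map (\<lambda>a. x a b) [1..<A+1]) @ y2)) ` {1..B})"
proof -
  interpret WRNA_gadget bar w \<Sigma> A B W x s5 s6 s7 y1 y2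
    by (rule WRNA_gadget.intro) (fact assms)+
  show ?thesis by (rule WRNA_eq)
qed

end
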